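(* Let $P\subset\mathbb R^d$ be a $d$-polytope, $d\geq 3$, $S$ a simplex facet of $P$ in bounded position, $\mathcal F\subseteq\operatorname{adj}(S)$ nonsimple, $v\in V_S(\mathcal F,\emptyset;P)$ and $Q=\operatorname{conv}(P\cup\{v\})$. Then: (1) every edge of $Q$ is of one of the following two types: (a) an edge $e$ of $P$ with $e\subseteq F$ for some facet $F$ of $P$ with $F\notin\{S\}\cup\mathcal F$; (b) a segment $e=[v,v']$, one for every vertex $v'$ of $S$, and in this case $\operatorname{fdeg}_Q(e)=\operatorname{fdeg}_S(v')$; (2) $f_1(Q)=f_1(P)+d-f$, where $f=|\mathcal F|$ if $d=3$ and $f=0$ otherwise.
   Context: For a face $G$ of a polytope $X$, $\operatorname{fdeg}_X(G)$ is the number of facets of $X$ containing $G$ (for $v'$ a vertex of the facet $S$, $S$ is regarded as a $(d-1)$-polytope). $f_1$ is the number of edges. For a facet $F$ of $P$ let $H_F=\{x:\langle x,a_F\rangle=\ell_F\}$ be its affine hull, oriented so that $P\subseteq\{x:\langle x,a_F\rangle\geq\ell_F\}$; $H_F^+$, $H_F^-$ are the open sides $\{>\}$, $\{<\}$. Two facets are adjacent if they share a ridge; $\operatorname{adj}(S)$ is the set of facets adjacent to $S$. A simplex facet is a facet combinatorially equivalent to a $(d-1)$-simplex. $S$ is in bounded position if for every set of $d$ facets in $\operatorname{adj}(S)$ their hyperplanes meet in a point of $H_S^-$. $\mathcal F\subseteq\operatorname{adj}(S)$ is nonsimple if there is no pair of adjacent facets $G,G'\in\mathcal F$ having a common $(d-3)$-face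 with $S$. $V_S(\mathcal F,\mathcal N;P)$ is the set of points lying in $H_F^-$ for $F\in\mathcal N\cup\{S\}$, in $H_F$ for $F\in\mathcal F$, and in $H_F^+$ for all other facets $F$ of $P$. *)

theory Defs
  imports "HOL-Analysis.Analysis"
begin

definition fdeg :: "'a::euclidean_space set \<Rightarrow> 'a set \<Rightarrow> nat" where
  "fdeg X G = card {F. F facet_of X \<and> G \<subseteq> F}"

definition f1 :: "'a::euclidean_space set \<Rightarrow> nat" where
  "f1 X = card {e. e edge_of X}"

text \<open>Open sides of the facet hyperplane H_F = aff hull F, oriented so that
  P lies in the closed positive side {x. a\<bullet>x \<ge> l}.\<close>
definition facet_plus :: "'a::euclidean_space set \<Rightarrow> 'a set \<Rightarrow> 'a set" where
  "facet_plus P F = {x. \<exists>a l. a \<noteq> 0 \<and> affine hull F = {y. a \<bullet> y = l} \<and>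
                        P \<subseteq> {y. a \<bullet> y \<ge> l} \<and> a \<bullet> x > l}"

definition facet_minus :: "'a::euclidean_space set \<Rightarrow> 'a set \<Rightarrow> 'a set" where
  "facet_minus P F = {x. \<exists>a l. a \<noteq> 0 \<and> affine hull F = {y. a \<bullet> y = l} \<and>
                        P \<subseteq> {y. a \<bullet> y \<ge> l} \<and> a \<bullet> x < l}"

definition adjacent_facets :: "'a::euclidean_space set \<Rightarrow> 'a set \<Rightarrow> 'a set \<Rightarrow> bool" where
  "adjacent_facets P F G \<longleftrightarrow> F facet_of P \<and> G facet_of P \<and> F \<noteq> G \<and>
     aff_dim (F \<inter> G) = aff_dim P - 2"

definition adj :: "'a::euclidean_space set \<Rightarrow> 'a set \<Rightarrow> 'a set set" where
  "adj P S = {F. adjacent_facets P S F}"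

definition simplex_facet :: "'a::euclidean_space set \<Rightarrow> 'a set \<Rightarrow> bool" where
  "simplex_facet P S \<longleftrightarrow> S facet_of P \<and> (aff_dim P - 1) simplex S"

definition bounded_position :: "'a::euclidean_space set \<Rightarrow> 'a set \<Rightarrow> bool" where
  "bounded_position P S \<longleftrightarrow>
     (\<forall>\<F>. \<F> \<subseteq> adj P S \<and> card \<F> = DIM('a) \<longrightarrow>
        (\<exists>x. \<Inter>{affine hull F | F. F \<in> \<F>} = {x} \<and> x \<in> facet_minus P S))"

definition nonsimple :: "'a::euclidean_space set \<Rightarrow> 'a set \<Rightarrow> 'a set set \<Rightarrow> bool" where
  "nonsimple P S \<F> \<longleftrightarrow>
     \<not> (\<exists>G\<in>\<F>. \<exists>G'\<in>\<F>. adjacent_facets P G G' \<and>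
            (G \<inter> G' \<inter> S) face_of S \<and> aff_dim (G \<inter> G' \<inter> S) = aff_dim P - 3)"

definition V_S :: "'a::euclidean_space set \<Rightarrow> 'a set \<Rightarrow> 'a set set \<Rightarrow> 'a set set \<Rightarrow> 'a set" where
  "V_S P S \<F> \<N> = {x.
      (\<forall>F\<in>\<N> \<union> {S}. x \<in> facet_minus P F) \<and>
      (\<forall>F\<in>\<F>. x \<in> affine hull F) \<and>
      (\<forall>F. F facet_of P \<and> F \<notin> \<N> \<union> {S} \<union> \<F> \<longrightarrow> x \<in> facet_plus P F)}"

end

theory Submission
  imports Defs
begin

(* Call a facet F of P beneath v if v lies strictly on the side of its hyperplane that contains
   P; by the choice of v these are exactly the facets other than S and those in \<F>. A face of P
   that is also a face of Q lies in a beneath facet (otherwise the segment from v through one of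
   its relative interior points could be prolonged inside P), and every face of a beneath facet
   stays a face of Q. An edge of Q through v ends at a vertex of S, since v is beyond S only.
   Hence the edges of Q are the edges of P lying in a beneath facet, together with the d
   segments [v, v'] over the vertices v' of the simplex S.
   An edge of P lying in no beneath facet lies only in S and in facets of \<F>. If it is not in S,
   two facets of \<F> adjacent along a ridge through it meet S in two distinct ridges of the
   simplex S, i.e. in a (d-3)-face, which nonsimplicity forbids. If it is in S and d \<ge> 4, the
   same happens for two facets of P adjacent around a (d-3)-face of S containing it. For d = 3
   the lost edges are exactly the ridges F \<inter> S with F in \<F>.
   A facet K of Q through v meets P either in a facet F in \<F> or in a ridge of S, and in both
   cases K \<inter> S is a facet of S; K \<mapsto> K \<inter> S is the bijection giving the facet degree of [v, v']. *)

section \<open>Supporting hyperplanes, faces and simplices\<close>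

lemma convex_hull_Int_supporting_hyperplane:
  fixes S :: "'a::real_inner set"
  assumes S: "\<And>x. x \<in> S \<Longrightarrow> g0 \<le> g \<bullet> x"
  shows "convex hull S \<inter> {x. g \<bullet> x = g0} = convex hull (S \<inter> {x. g \<bullet> x = g0})"
proof
  let ?H = "{x. g \<bullet> x = g0}"
  have hull_H: "convex hull (S \<inter> ?H) \<subseteq> ?H"
    by (simp add: hull_minimal convex_hyperplane)
  show "convex hull (S \<inter> ?H) \<subseteq> convex hull S \<inter> ?H"
    using hull_H hull_mono[of "S \<inter> ?H" S] by blast
  let ?C = "{x. g0 < g \<bullet> x} \<union> convex hull (S \<inter> ?H)"
  have "convex ?C"
  proof (rule convexI)
    fix x y and u w :: real
    assume x: "x \<in> ?C" and y: "y \<in> ?C" and uw: "0 \<le> u" "0 \<le> w" "u + w = 1"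
    have ge: "g0 \<le> g \<bullet> x" "g0 \<le> g \<bullet> y" using x y hull_H by force+
    consider "u = 0 \<or> w = 0" | "x \<in> convex hull (S \<inter> ?H)" "y \<in> convex hull (S \<inter> ?H)"
      | "0 < u" "0 < w" "g0 < g \<bullet> x \<or> g0 < g \<bullet> y"
      using x y uw by force
    then show "u *\<^sub>R x + w *\<^sub>R y \<in> ?C"
    proof cases
      case 1
      then show ?thesis using x y uw by auto
    next
      case 2
      then show ?thesis using uw by (simp add: convexD)
    next
      case 3
      then have "u * g0 + w * g0 < u * (g \<bullet> x) + w * (g \<bullet> y)"
        using ge mult_left_mono[of g0 _ u] mult_left_mono[of g0 _ w]
          mult_strict_left_mono[of g0 _ u] mult_strict_left_mono[of g0 _ w]
        by (smt (verit))
      then show ?thesis using uw by (simp add: inner_add_right distrib_right[symmetric])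
    qed
  qed
  moreover have "S \<subseteq> ?C" using S by (force intro: hull_inc)
  ultimately have "convex hull S \<subseteq> ?C" by (intro hull_minimal)
  then show "convex hull S \<inter> ?H \<subseteq> convex hull (S \<inter> ?H)" by force
qed

lemma face_of_convex_hull_Int_supporting_hyperplane:
  fixes S :: "'a::real_inner set"
  assumes "\<And>x. x \<in> S \<Longrightarrow> g0 \<le> g \<bullet> x"
  shows "convex hull (S \<inter> {x. g \<bullet> x = g0}) face_of convex hull S"
proof -
  have "convex hull S \<subseteq> {x. g0 \<le> g \<bullet> x}"
    using assms by (intro hull_minimal) (auto simp: convex_halfspace_ge)
  then have "(convex hull S \<inter> {x. g \<bullet> x = g0}) face_of convex hull S"
    by (intro face_of_Int_supporting_hyperplane_ge) auto
  then show ?thesis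
    by (simp only: convex_hull_Int_supporting_hyperplane[OF assms])
qed

lemma hyperplane_eq_scaleR:
  fixes a b :: "'a::real_inner"
  assumes "a \<noteq> 0" "{x. a \<bullet> x = l} = {x. b \<bullet> x = m}"
  shows "\<exists>\<mu>. b = \<mu> *\<^sub>R a \<and> m = \<mu> * l"
proof -
  define x0 where "x0 = (l / (a \<bullet> a)) *\<^sub>R a"
  have x0: "a \<bullet> x0 = l" using assms(1) by (simp add: x0_def)
  then have bx0: "b \<bullet> x0 = m" using assms(2) by blast
  have orth: "b \<bullet> w = 0" if "a \<bullet> w = 0" for w
  proof -
    have "a \<bullet> (x0 + w) = l" using x0 that by (simp add: inner_add_right)
    then have "b \<bullet> (x0 + w) = m" using assms(2) by blast
    then show ?thesis using bx0 by (simp add: inner_add_right)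
  qed
  define \<mu> where "\<mu> = (b \<bullet> a) / (a \<bullet> a)"
  have "a \<bullet> (b - \<mu> *\<^sub>R a) = 0"
    using assms(1) by (simp add: \<mu>_def inner_diff_right inner_commute)
  moreover from this have "b \<bullet> (b - \<mu> *\<^sub>R a) = 0" by (rule orth)
  ultimately have "(b - \<mu> *\<^sub>R a) \<bullet> (b - \<mu> *\<^sub>R a) = 0"
    by (simp add: inner_diff_left inner_commute)
  then have "b = \<mu> *\<^sub>R a" by simp
  moreover have "m = \<mu> * l" using bx0 x0 \<open>b = \<mu> *\<^sub>R a\<close> by simp
  ultimately show ?thesis by blast
qed

lemma face_of_subset_aff_dim_eq:
  fixes X :: "'a::euclidean_space set"
  assumes "T face_of X" "U face_of X" "T \<subseteq> U" "aff_dim T = aff_dim U"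
  shows "T = U"
  by (metis assms face_of_aff_dim_lt face_of_imp_convex face_of_imp_subset face_of_subset
      order_less_irrefl)

lemma aff_dim_Int_facets_lt:
  fixes X :: "'a::euclidean_space set"
  assumes "F facet_of X" "G facet_of X" "F \<noteq> G"
  shows "aff_dim (F \<inter> G) < aff_dim F"
proof -
  have F: "F face_of X" and G: "G face_of X" using assms facet_of_imp_face_of by blast+
  have "F \<inter> G \<noteq> F"
    using face_of_subset_aff_dim_eq[OF F G] assms by (auto simp: facet_of_def)
  moreover have "(F \<inter> G) face_of F"
    by (meson F G face_of_Int face_of_subset face_of_imp_subset inf_le1)
  ultimately show ?thesis using face_of_aff_dim_lt face_of_imp_convex[OF F] by blast
qed

lemma ridge_in_second_facet:
  fixes X :: "'a::euclidean_space set"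
  assumes "polyhedron X" "R face_of X" "R \<noteq> {}" "aff_dim R = aff_dim X - 2"
    "F facet_of X" "R \<subseteq> F"
  obtains G where "G facet_of X" "G \<noteq> F" "R \<subseteq> G"
proof -
  have "R \<noteq> F" using assms(4,5) by (auto simp: facet_of_def)
  moreover have "R = \<Inter>{G. G facet_of X \<and> R \<subseteq> G}"
    using face_of_polyhedron assms(1-4) by fastforce
  ultimately show ?thesis using that assms(5,6) by blast
qed

lemma facet_of_facet_eq_Int_facets:
  fixes X :: "'a::euclidean_space set"
  assumes "polyhedron X" "R facet_of F" "F facet_of X"
  obtains G where "G facet_of X" "G \<noteq> F" "F \<inter> G = R"
proof -
  have RX: "R face_of X"
    using assms(2,3) face_of_trans facet_of_imp_face_of by blast
  have RF: "R \<subseteq> F" and dim: "aff_dim R = aff_dim X - 2" and "R \<noteq> {}"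
    using assms(2,3) by (auto simp: facet_of_def face_of_imp_subset)
  then obtain G where G: "G facet_of X" "G \<noteq> F" "R \<subseteq> G"
    using ridge_in_second_facet[OF assms(1) RX _ _ assms(3)] by blast
  have "(F \<inter> G) face_of X"
    using assms(3) G(1) face_of_Int facet_of_imp_face_of by blast
  moreover have "R \<subseteq> F \<inter> G" using RF G(3) by blast
  moreover have "aff_dim (F \<inter> G) \<le> aff_dim R"
    using aff_dim_Int_facets_lt[OF assms(3) G(1)] G(2) dim assms(3)
    by (simp add: facet_of_def)
  ultimately have "R = F \<inter> G"
    using face_of_subset_aff_dim_eq[OF RX] aff_dim_subset[of R "F \<inter> G"] by simp
  then show ?thesis using that G(1,2) by blast
qed

lemma edge_of_polytope_eq_segment:
  fixes X :: "'a::euclidean_space set"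
  assumes "polytope X" "E edge_of X"
  obtains a b where "a \<noteq> b" "a extreme_point_of X" "b extreme_point_of X"
    "E = closed_segment a b"
proof -
  have EX: "E face_of X" and dim: "aff_dim E = 1" using assms(2) by (auto simp: edge_of_def)
  have "compact E"
    using face_of_imp_compact EX assms(1) polytope_imp_compact polytope_imp_convex by blast
  moreover have "convex E" "E \<noteq> {}" "collinear E"
    using face_of_imp_convex[OF EX] dim by (auto simp: collinear_aff_dim)
  ultimately obtain a b where E: "E = closed_segment a b"
    using compact_convex_collinear_segment by blast
  then have "a extreme_point_of X" "b extreme_point_of X"
    using extreme_point_of_face[OF EX] extreme_point_of_segment by blast+
  moreover have "a \<noteq> b" using E dim by auto
  ultimately show ?thesis using that E by blast
qed

lemma face_of_Int_convex_subset:
  assumes "E face_of Q" "P \<subseteq> Q" "convex P"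
  shows "(E \<inter> P) face_of P"
proof -
  have "convex (E \<inter> P)" using assms face_of_imp_convex convex_Int by blast
  then show ?thesis using assms(1,2) unfolding face_of_def by blast
qed

lemma polyhedron_Int_affine_hull_face:
  fixes X :: "'a::euclidean_space set"
  assumes "polyhedron X" "K face_of X"
  shows "X \<inter> affine hull K = K"
proof -
  have "K exposed_face_of X" using exposed_face_of_polyhedron assms by blast
  then obtain a b where "X \<subseteq> {x. a \<bullet> x \<le> b}" and K: "K = X \<inter> {x. a \<bullet> x = b}"
    unfolding exposed_face_of_def by blast
  then have "affine hull K \<subseteq> {x. a \<bullet> x = b}"
    by (simp add: hull_minimal affine_hyperplane)
  then have "X \<inter> affine hull K \<subseteq> K" using K by blast
  moreover have "K \<subseteq> X \<inter> affine hull K"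
    using face_of_imp_subset[OF assms(2)] hull_subset[of K affine] by blast
  ultimately show ?thesis by blast
qed

lemma extreme_point_of_subset:
  "x extreme_point_of Q \<Longrightarrow> S \<subseteq> Q \<Longrightarrow> x \<in> S \<Longrightarrow> x extreme_point_of S"
  by (auto simp: extreme_point_of_def)

lemma mem_open_segment_extension:
  fixes x v :: "'a::real_vector"
  assumes "0 < t" "x \<noteq> v"
  shows "x \<in> open_segment (x + t *\<^sub>R (x - v)) v"
proof -
  define y where "y = x + t *\<^sub>R (x - v)"
  define u where "u = t / (1 + t)"
  have u: "0 < u" "u < 1" "(1 + t) * (1 - u) = 1" "(1 + t) * u = t"
    using assms(1) by (simp_all add: u_def field_simps)
  have "(1 + t) *\<^sub>R ((1 - u) *\<^sub>R y + u *\<^sub>R v) = ((1 + t) * (1 - u)) *\<^sub>R y + ((1 + t) * u) *\<^sub>R v"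
    by (simp add: scaleR_add_right)
  also have "\<dots> = (1 + t) *\<^sub>R x" unfolding u(3,4) by (simp add: y_def algebra_simps)
  finally have "x = (1 - u) *\<^sub>R y + u *\<^sub>R v" using assms(1) by simp
  moreover have "y \<noteq> v"
  proof
    assume "y = v"
    then have "(1 + t) *\<^sub>R (x - v) = 0" by (simp add: y_def algebra_simps)
    then show False using assms by simp
  qed
  ultimately show ?thesis unfolding in_segment(2) y_def[symmetric] using u(1,2) by blast
qed

lemma mem_affine_hull_extension:
  fixes x v :: "'a::real_vector"
  assumes "t \<noteq> 0"
  shows "v \<in> affine hull {x, x + t *\<^sub>R (v - x)}"
proof -
  have "v = (1 - 1 / t) *\<^sub>R x + (1 / t) *\<^sub>R (x + t *\<^sub>R (v - x))"
    using assms by (simp add: algebra_simps)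
  then show ?thesis unfolding affine_hull_2 by force
qed

lemma mem_affine_hull_affine_independent_subset:
  assumes "\<not> affine_dependent c" "A \<subseteq> c" "x \<in> c" "x \<in> affine hull A"
  shows "x \<in> A"
  using assms hull_mono[of A "c - {x}"] unfolding affine_dependent_def by blast

lemma convex_hull_affine_independent_Int:
  fixes c :: "'a::euclidean_space set"
  assumes c: "\<not> affine_dependent c" and "A \<subseteq> c" "B \<subseteq> c"
  shows "convex hull A \<inter> convex hull B = convex hull (A \<inter> B)"
proof
  show "convex hull (A \<inter> B) \<subseteq> convex hull A \<inter> convex hull B"
    by (simp add: hull_mono)
  have "convex hull A face_of convex hull c" "convex hull B face_of convex hull c"
    using face_of_convex_hull_affine_independent[OF c] assms(2,3) by auto
  then have "(convex hull A \<inter> convex hull B) face_of convex hull c"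
    by (rule face_of_Int)
  then obtain c' where c': "c' \<subseteq> c" "convex hull A \<inter> convex hull B = convex hull c'"
    using face_of_convex_hull_affine_independent[OF c] by auto
  have "c' \<subseteq> A \<inter> B"
  proof
    fix x assume "x \<in> c'"
    then have "x \<in> convex hull A" "x \<in> convex hull B"
      using c'(2) hull_inc[of x c'] by auto
    then have "x \<in> affine hull A" "x \<in> affine hull B"
      using convex_hull_subset_affine_hull by auto
    then show "x \<in> A \<inter> B"
      using mem_affine_hull_affine_independent_subset[OF c] assms(2,3) \<open>x \<in> c'\<close> c'(1)
      by blast
  qed
  then show "convex hull A \<inter> convex hull B \<subseteq> convex hull (A \<inter> B)"
    unfolding c'(2) by (rule hull_mono)
qed

lemma aff_dim_Int_facets_of_simplex:
  fixes c :: "'a::euclidean_space set"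
  assumes c: "\<not> affine_dependent c"
    and R: "R1 facet_of convex hull c" "R2 facet_of convex hull c" "R1 \<noteq> R2"
  shows "aff_dim (R1 \<inter> R2) = int (card c) - 3"
proof -
  obtain u1 u2 where u: "u1 \<in> c" "R1 = convex hull (c - {u1})" "u2 \<in> c"
    "R2 = convex hull (c - {u2})"
    using R(1,2) unfolding facet_of_convex_hull_affine_independent[OF c] by blast
  then have "u1 \<noteq> u2" using R(3) by blast
  have "R1 \<inter> R2 = convex hull ((c - {u1}) \<inter> (c - {u2}))"
    unfolding u(2,4) by (rule convex_hull_affine_independent_Int[OF c Diff_subset Diff_subset])
  also have "(c - {u1}) \<inter> (c - {u2}) = c - {u1, u2}" by blast
  finally have "R1 \<inter> R2 = convex hull (c - {u1, u2})" .
  moreover have "int (card (c - {u1, u2})) = aff_dim (c - {u1, u2}) + 1"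
    by (rule aff_dim_affine_independent[OF affine_independent_subset[OF c Diff_subset]])
  moreover have "card (c - {u1, u2}) = card c - 2"
    using u \<open>u1 \<noteq> u2\<close> aff_independent_finite[OF c] by (simp add: card_Diff_subset)
  moreover have "card {u1, u2} \<le> card c"
    using u aff_independent_finite[OF c] by (intro card_mono) auto
  then have "card c \<ge> 2" using \<open>u1 \<noteq> u2\<close> by simp
  ultimately show ?thesis by (simp add: aff_dim_convex_hull of_nat_diff)
qed

lemma two_facets_of_simplex_containing:
  fixes c :: "'a::euclidean_space set"
  assumes c: "\<not> affine_dependent c" and "X \<subseteq> c" "2 \<le> card (c - X)"
  obtains R1 R2 where "R1 facet_of convex hull c" "R2 facet_of convex hull c" "R1 \<noteq> R2"
    "convex hull X \<subseteq> R1 \<inter> R2"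
proof -
  have "finite c" using aff_independent_finite[OF c] .
  moreover have "\<not> card (c - X) \<le> Suc 0" using assms(3) by simp
  ultimately obtain u1 u2 where u: "u1 \<in> c - X" "u2 \<in> c - X" "u1 \<noteq> u2"
    using card_le_Suc0_iff_eq[of "c - X"] by blast
  define R where "R u = convex hull (c - {u})" for u
  have R: "R u facet_of convex hull c" if "u \<in> c - X" "u' \<in> c - X" "u \<noteq> u'" for u u'
    using that facet_of_convex_hull_affine_independent[OF c] hull_inc[of u' "c - {u}"]
    unfolding R_def by blast
  have "R u1 \<noteq> R u2"
    using u hull_inc[of u1 "c - {u2}"] convex_hull_subset_affine_hull
      mem_affine_hull_affine_independent_subset[OF c, of "c - {u1}" u1]
    unfolding R_def by blast
  moreover have "convex hull X \<subseteq> R u1 \<inter> R u2"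
    using u assms(2) unfolding R_def by (intro Int_greatest hull_mono) auto
  ultimately show ?thesis using that R u by metis
qed

section \<open>Facet slacks of a full-dimensional polytope\<close>

locale fulldim_polytope =
  fixes P :: "'a::euclidean_space set"
  assumes polytope_P: "polytope P" and aff_dim_P: "aff_dim P = int DIM('a)"
begin

lemma convex_P: "convex P"
  using polytope_P polytope_imp_convex by blast

lemma polyhedron_P: "polyhedron P"
  using polytope_P polytope_imp_polyhedron by blast

lemma finite_facets: "finite {F. F facet_of P}"
  using polytope_P finite_polytope_facets by blast

lemma aff_dim_facet: "F facet_of P \<Longrightarrow> aff_dim F = int DIM('a) - 1"
  using aff_dim_P by (simp add: facet_of_def)

lemma affine_hull_facet_eq_hyperplane:
  assumes "F facet_of P" "F \<subseteq> {x. a \<bullet> x = b}" "a \<noteq> 0"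
  shows "affine hull F = {x. a \<bullet> x = b}"
proof (rule affine_dim_equal)
  show "affine hull F \<subseteq> {x. a \<bullet> x = b}"
    using assms(2) by (simp add: hull_minimal affine_hyperplane)
  show "aff_dim (affine hull F) = aff_dim {x. a \<bullet> x = b}"
    using aff_dim_facet[OF assms(1)] assms(3) by simp
qed (use assms(1) in \<open>auto simp: facet_of_def affine_hyperplane\<close>)

definition facet_ineq :: "'a set \<Rightarrow> 'a \<times> real" where
  "facet_ineq F = (SOME (a, b). a \<noteq> 0 \<and> P \<subseteq> {x. b \<le> a \<bullet> x} \<and> F = P \<inter> {x. a \<bullet> x = b})"

definition facet_normal :: "'a set \<Rightarrow> 'a" where
  "facet_normal F = fst (facet_ineq F)"

text \<open>The slack of x at the facet F is the paper's \<open>\<langle>x, a\<^sub>F\<rangle> - \<ell>\<^sub>F\<close>: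
  the open sides \<open>H\<^sub>F\<^sup>+\<close> and \<open>H\<^sub>F\<^sup>-\<close> are its positive and negative sets
  (facet_plus_eq, facet_minus_eq).\<close>

definition slack :: "'a set \<Rightarrow> 'a \<Rightarrow> real" where
  "slack F x = facet_normal F \<bullet> x - snd (facet_ineq F)"

lemma facet_slack:
  assumes "F facet_of P"
  shows "facet_normal F \<noteq> 0" "\<And>x. x \<in> P \<Longrightarrow> 0 \<le> slack F x"
    "F = {x \<in> P. slack F x = 0}"
proof -
  obtain a b where "a \<noteq> 0" "P \<subseteq> {x. a \<bullet> x \<le> b}" "F = P \<inter> {x. a \<bullet> x = b}"
    using facet_of_polyhedron[OF polyhedron_P assms] by blast
  then have "(\<lambda>(a, b). a \<noteq> 0 \<and> P \<subseteq> {x. b \<le> a \<bullet> x} \<and> F = P \<inter> {x. a \<bullet> x = b}) (- a, - b)"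
    by auto
  then have "(\<lambda>(a, b). a \<noteq> 0 \<and> P \<subseteq> {x. b \<le> a \<bullet> x} \<and> F = P \<inter> {x. a \<bullet> x = b}) (facet_ineq F)"
    unfolding facet_ineq_def by (rule someI)
  then show "facet_normal F \<noteq> 0" "\<And>x. x \<in> P \<Longrightarrow> 0 \<le> slack F x"
    "F = {x \<in> P. slack F x = 0}"
    unfolding facet_normal_def slack_def by (auto simp: case_prod_beta)
qed

lemma slack_nonneg: "F facet_of P \<Longrightarrow> x \<in> P \<Longrightarrow> 0 \<le> slack F x"
  using facet_slack(2) by blast

lemma mem_facet_iff_slack: "F facet_of P \<Longrightarrow> x \<in> P \<Longrightarrow> x \<in> F \<longleftrightarrow> slack F x = 0"
  using facet_slack(3) by blast

lemma slack_facet: "F facet_of P \<Longrightarrow> x \<in> F \<Longrightarrow> slack F x = 0"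
  using facet_slack(3) by blast

lemma affine_hull_facet: "F facet_of P \<Longrightarrow> affine hull F = {x. slack F x = 0}"
  using affine_hull_facet_eq_hyperplane[of F "facet_normal F" "snd (facet_ineq F)"]
    facet_slack(1,3)[of F] by (auto simp: slack_def)

lemma slack_convex_combination:
  "slack F (u *\<^sub>R x + (1 - u) *\<^sub>R y) = u * slack F x + (1 - u) * slack F y"
  by (simp add: slack_def inner_add_right algebra_simps)

lemma facet_normal_inner_diff: "facet_normal F \<bullet> (x - y) = slack F x - slack F y"
  by (simp add: slack_def inner_diff_right)

lemma slack_combination:
  "\<exists>g g0. \<forall>x. g \<bullet> x - g0 = (\<Sum>G\<in>\<G>. \<mu> G * slack G x)"
  by (intro exI[of _ "\<Sum>G\<in>\<G>. \<mu> G *\<^sub>R facet_normal G"] exI[of _ "\<Sum>G\<in>\<G>. \<mu> G * snd (facet_ineq G)"])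
    (simp add: slack_def inner_sum_left sum_subtractf right_diff_distrib)

lemma slack_sum_nonneg:
  assumes "\<And>G. G \<in> \<G> \<Longrightarrow> G facet_of P" "\<And>G. G \<in> \<G> \<Longrightarrow> 0 < \<mu> G" "p \<in> P"
  shows "0 \<le> (\<Sum>G\<in>\<G>. \<mu> G * slack G p)"
  using assms slack_nonneg by (intro sum_nonneg mult_nonneg_nonneg) (auto simp: less_imp_le)

lemma slack_sum_eq_0_iff:
  assumes "finite \<G>" "\<And>G. G \<in> \<G> \<Longrightarrow> G facet_of P" "\<And>G. G \<in> \<G> \<Longrightarrow> 0 < \<mu> G" "p \<in> P"
  shows "(\<Sum>G\<in>\<G>. \<mu> G * slack G p) = 0 \<longleftrightarrow> (\<forall>G\<in>\<G>. p \<in> G)"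
proof -
  have "(\<Sum>G\<in>\<G>. \<mu> G * slack G p) = 0 \<longleftrightarrow> (\<forall>G\<in>\<G>. \<mu> G * slack G p = 0)"
    using assms slack_nonneg by (intro sum_nonneg_eq_0_iff mult_nonneg_nonneg) (auto simp: less_imp_le)
  also have "\<dots> \<longleftrightarrow> (\<forall>G\<in>\<G>. p \<in> G)"
    using assms mem_facet_iff_slack by (auto simp: less_imp_neq[symmetric])
  finally show ?thesis .
qed

lemma exists_slack_pos:
  assumes "F facet_of P"
  shows "\<exists>p\<in>P. 0 < slack F p"
proof (rule ccontr)
  assume "\<not> ?thesis"
  then have "P \<subseteq> F" using mem_facet_iff_slack[OF assms] slack_nonneg[OF assms] by force
  then have "aff_dim P \<le> aff_dim F" by (rule aff_dim_subset)
  then show False using aff_dim_facet[OF assms] aff_dim_P by simp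
qed

lemma hyperplane_eq_slack_scaled:
  assumes "F facet_of P" "a \<noteq> 0" "F \<subseteq> {x. a \<bullet> x = l}" "P \<subseteq> {x. l \<le> a \<bullet> x}"
  shows "\<exists>\<mu>>0. \<forall>x. a \<bullet> x - l = \<mu> * slack F x"
proof -
  have "{x. facet_normal F \<bullet> x = snd (facet_ineq F)} = affine hull F"
    by (simp add: affine_hull_facet[OF assms(1)] slack_def)
  also have "\<dots> = {x. a \<bullet> x = l}"
    by (rule affine_hull_facet_eq_hyperplane[OF assms(1,3,2)])
  finally have "\<exists>\<mu>. a = \<mu> *\<^sub>R facet_normal F \<and> l = \<mu> * snd (facet_ineq F)"
    by (rule hyperplane_eq_scaleR[OF facet_slack(1)[OF assms(1)]])
  then obtain \<mu> where \<mu>: "a = \<mu> *\<^sub>R facet_normal F" "l = \<mu> * snd (facet_ineq F)"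
    by blast
  then have eq: "a \<bullet> x - l = \<mu> * slack F x" for x
    by (simp add: slack_def algebra_simps)
  obtain p where p: "p \<in> P" "0 < slack F p" using exists_slack_pos[OF assms(1)] by blast
  have "0 \<le> \<mu> * slack F p" using assms(4) p(1) eq[of p] by auto
  then have "0 \<le> \<mu>" using p(2) by (simp add: zero_le_mult_iff)
  moreover have "\<mu> \<noteq> 0" using \<mu>(1) assms(2) by auto
  ultimately have "0 < \<mu>" by simp
  with eq show ?thesis by blast
qed

lemma facet_plus_eq:
  assumes "F facet_of P"
  shows "facet_plus P F = {x. 0 < slack F x}"
proof
  show "facet_plus P F \<subseteq> {x. 0 < slack F x}"
  proof
    fix x assume "x \<in> facet_plus P F"
    then obtain a l where al: "a \<noteq> 0" "affine hull F = {y. a \<bullet> y = l}"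
      "P \<subseteq> {y. l \<le> a \<bullet> y}" "l < a \<bullet> x"
      unfolding facet_plus_def by blast
    then have "F \<subseteq> {y. a \<bullet> y = l}" using hull_subset[of F affine] by blast
    then obtain \<mu> where "0 < \<mu>" "a \<bullet> x - l = \<mu> * slack F x"
      using hyperplane_eq_slack_scaled[OF assms al(1) _ al(3)] by blast
    then have "0 < slack F x" using al(4) mult_nonneg_nonpos[of \<mu> "slack F x"] by (smt (verit))
    then show "x \<in> {x. 0 < slack F x}" by simp
  qed
  show "{x. 0 < slack F x} \<subseteq> facet_plus P F"
    unfolding facet_plus_def using facet_slack[OF assms] affine_hull_facet[OF assms]
    by (auto simp: slack_def)
qed

lemma facet_minus_eq:
  assumes "F facet_of P"
  shows "facet_minus P F = {x. slack F x < 0}"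
proof
  show "facet_minus P F \<subseteq> {x. slack F x < 0}"
  proof
    fix x assume "x \<in> facet_minus P F"
    then obtain a l where al: "a \<noteq> 0" "affine hull F = {y. a \<bullet> y = l}"
      "P \<subseteq> {y. l \<le> a \<bullet> y}" "a \<bullet> x < l"
      unfolding facet_minus_def by blast
    then have "F \<subseteq> {y. a \<bullet> y = l}" using hull_subset[of F affine] by blast
    then obtain \<mu> where "0 < \<mu>" "a \<bullet> x - l = \<mu> * slack F x"
      using hyperplane_eq_slack_scaled[OF assms al(1) _ al(3)] by blast
    then have "slack F x < 0" using al(4) mult_nonneg_nonneg[of \<mu> "slack F x"] by (smt (verit))
    then show "x \<in> {x. slack F x < 0}" by simp
  qed
  show "{x. slack F x < 0} \<subseteq> facet_minus P F"
    unfolding facet_minus_def using facet_slack[OF assms] affine_hull_facet[OF assms]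
    by (auto simp: slack_def)
qed

lemma mem_P_if_slack_nonneg:
  assumes "\<And>F. F facet_of P \<Longrightarrow> 0 \<le> slack F x"
  shows "x \<in> P"
proof -
  obtain \<H> where fin: "finite \<H>" and seq: "P = affine hull P \<inter> \<Inter>\<H>"
    and faces: "\<And>h. h \<in> \<H> \<Longrightarrow> \<exists>a b. a \<noteq> 0 \<and> h = {x. a \<bullet> x \<le> b}"
    and min: "\<And>\<H>'. \<H>' \<subset> \<H> \<Longrightarrow> P \<subset> affine hull P \<inter> \<Inter>\<H>'"
    using polyhedron_P by (simp add: polyhedron_Int_affine_minimal) meson
  obtain a b where ab: "\<And>h. h \<in> \<H> \<Longrightarrow> a h \<noteq> 0 \<and> h = {x. a h \<bullet> x \<le> b h}"
    using faces by metis
  have "x \<in> h" if h: "h \<in> \<H>" for h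
  proof -
    let ?C = "P \<inter> {x. a h \<bullet> x = b h}"
    have C: "?C facet_of P"
      using facet_of_polyhedron_explicit[OF fin seq ab min] h by blast
    have "P \<subseteq> {x. - b h \<le> (- a h) \<bullet> x}" using seq h ab[OF h] by auto
    then obtain \<mu> where "0 < \<mu>" "\<And>y. (- a h) \<bullet> y - (- b h) = \<mu> * slack ?C y"
      using hyperplane_eq_slack_scaled[OF C, of "- a h" "- b h"] ab[OF h] by auto
    then have "b h - a h \<bullet> x = \<mu> * slack ?C x" by simp
    then have "0 \<le> b h - a h \<bullet> x" using assms[OF C] \<open>0 < \<mu>\<close> by simp
    then show "x \<in> h" using ab[OF h] by auto
  qed
  moreover have "affine hull P = UNIV" using aff_dim_P aff_dim_eq_full by blast
  ultimately show "x \<in> P" using seq by blast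
qed

lemma slack_pos_rel_interior_face:
  assumes "E face_of P" "x \<in> rel_interior E" "F facet_of P" "\<not> E \<subseteq> F"
  shows "0 < slack F x"
proof -
  have "(E \<inter> F) face_of E"
    by (meson assms(1,3) face_of_Int facet_of_imp_face_of face_of_subset face_of_imp_subset inf_le1)
  moreover have "E \<inter> F \<noteq> E" using assms(4) by blast
  ultimately have "(E \<inter> F) \<inter> rel_interior E = {}" by (rule face_of_disjoint_rel_interior)
  then have "x \<notin> F" using assms(2) rel_interior_subset by blast
  moreover have "x \<in> P" using assms(1,2) rel_interior_subset face_of_imp_subset by blast
  ultimately show ?thesis using mem_facet_iff_slack[OF assms(3)] slack_nonneg[OF assms(3)] by force
qed

lemma eventually_mem_P_along:
  assumes "E face_of P" "x \<in> rel_interior E"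
    and "\<And>F. F facet_of P \<Longrightarrow> E \<subseteq> F \<Longrightarrow> 0 \<le> facet_normal F \<bullet> w"
  shows "\<forall>\<^sub>F t in at_right 0. x + t *\<^sub>R w \<in> P"
proof -
  have xE: "x \<in> E" using assms(2) rel_interior_subset by blast
  have slack_step: "slack F (x + t *\<^sub>R w) = slack F x + t * (facet_normal F \<bullet> w)" for F t
    by (simp add: slack_def inner_add_right)
  have "\<forall>\<^sub>F t in at_right 0. 0 \<le> slack F (x + t *\<^sub>R w)" if F: "F facet_of P" for F
  proof (cases "E \<subseteq> F")
    case True
    then have "slack F x = 0" using slack_facet F xE by blast
    then show ?thesis
      using eventually_at_right_less[of 0] assms(3)[OF F True]
      by (auto elim!: eventually_mono simp: slack_step)
  next
    case False
    then have "0 < slack F x" using slack_pos_rel_interior_face assms(1,2) F by blast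
    moreover have "((\<lambda>t. slack F x + t * (facet_normal F \<bullet> w))
        \<longlongrightarrow> slack F x + 0 * (facet_normal F \<bullet> w)) (at_right 0)"
      by (intro tendsto_intros)
    ultimately have "\<forall>\<^sub>F t in at_right 0. 0 < slack F x + t * (facet_normal F \<bullet> w)"
      by (simp add: order_tendstoD(1))
    then show ?thesis by (auto elim!: eventually_mono simp: slack_step)
  qed
  then have "\<forall>\<^sub>F t in at_right 0. \<forall>F\<in>{F. F facet_of P}. 0 \<le> slack F (x + t *\<^sub>R w)"
    using finite_facets by (intro eventually_ball_finite) auto
  then show ?thesis by (rule eventually_mono) (auto intro: mem_P_if_slack_nonneg)
qed

lemma vertex_eq_Inter_facets:
  assumes "x extreme_point_of P"
  shows "\<Inter>{F. F facet_of P \<and> x \<in> F} = {x}"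
proof -
  have "{x} face_of P" using assms face_of_singleton by blast
  moreover have "{x} \<noteq> P"
  proof
    assume "{x} = P"
    then have "int DIM('a) = 0" using aff_dim_P by (metis aff_dim_sing)
    then show False using DIM_positive[where 'a='a] by linarith
  qed
  ultimately have "{x} = \<Inter>{F. F facet_of P \<and> {x} \<subseteq> F}"
    using face_of_polyhedron[OF polyhedron_P] by blast
  then show ?thesis by simp
qed

lemma facet_point_off_other_facets:
  assumes "F facet_of P"
  obtains y where "y \<in> F" "\<And>K. K facet_of P \<Longrightarrow> K \<noteq> F \<Longrightarrow> 0 < slack K y"
proof -
  have FP: "F face_of P" using assms facet_of_imp_face_of by blast
  have "F \<noteq> {}" using assms by (simp add: facet_of_def)
  then obtain y where y: "y \<in> rel_interior F"
    using rel_interior_eq_empty face_of_imp_convex[OF FP] by blast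
  have "\<not> F \<subseteq> K" if K: "K facet_of P" "K \<noteq> F" for K
  proof
    assume "F \<subseteq> K"
    moreover have "aff_dim F = aff_dim K" using aff_dim_facet assms K(1) by simp
    ultimately have "F = K"
      using face_of_subset_aff_dim_eq[OF FP facet_of_imp_face_of[OF K(1)]] by blast
    with K(2) show False by simp
  qed
  then show ?thesis
    using that[of y] y rel_interior_subset slack_pos_rel_interior_face[OF FP y] by blast
qed

lemma affine_hull_ridge_insert_two_points:
  assumes R: "R \<subseteq> F" "R \<subseteq> G" "aff_dim R = int DIM('a) - 2"
    and F: "F facet_of P" "yF \<in> F" "slack G yF \<noteq> 0"
    and G: "G facet_of P" "slack F yG \<noteq> 0"
  shows "affine hull (insert yG (insert yF R)) = UNIV"
proof -
  have "affine hull R \<subseteq> affine hull G" by (rule hull_mono[OF R(2)])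
  then have "yF \<notin> affine hull R" using F(3) affine_hull_facet[OF G(1)] by auto
  moreover have "affine hull (insert yF R) \<subseteq> affine hull F"
    using R(1) F(2) by (intro hull_mono) auto
  then have "yG \<notin> affine hull (insert yF R)" using G(2) affine_hull_facet[OF F(1)] by auto
  ultimately have "aff_dim (insert yG (insert yF R)) = int DIM('a)"
    using R(3) by (simp add: aff_dim_insert)
  then show ?thesis by (simp add: aff_dim_eq_full)
qed

lemma slacks_spanned_by_two_points:
  assumes R: "R \<subseteq> F" "R \<subseteq> G" "aff_dim R = int DIM('a) - 2"
    and F: "F facet_of P" "yF \<in> F" "slack G yF \<noteq> 0"
    and G: "G facet_of P" "yG \<in> G" "slack F yG \<noteq> 0"
    and \<K>: "\<And>K. K \<in> \<K> \<Longrightarrow> K facet_of P \<and> R \<subseteq> K"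
  shows "\<exists>l1 l2. \<forall>K\<in>\<K>. slack K p = l1 * slack K yF + l2 * slack K yG"
proof -
  define A where "A = {p. \<exists>l1 l2. \<forall>K\<in>\<K>. slack K p = l1 * slack K yF + l2 * slack K yG}"
  have "affine A"
  proof (unfold affine_def, intro ballI allI impI)
    fix x y and u v :: real
    assume "x \<in> A" "y \<in> A" "u + v = 1"
    then obtain a1 a2 b1 b2 where a: "\<forall>K\<in>\<K>. slack K x = a1 * slack K yF + a2 * slack K yG"
      and b: "\<forall>K\<in>\<K>. slack K y = b1 * slack K yF + b2 * slack K yG" and v: "v = 1 - u"
      unfolding A_def by auto
    have "slack K (u *\<^sub>R x + v *\<^sub>R y) = u * slack K x + v * slack K y" for K
      using slack_convex_combination[of K u x y] v by simp
    then have "\<forall>K\<in>\<K>. slack K (u *\<^sub>R x + v *\<^sub>R y)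
        = (u * a1 + v * b1) * slack K yF + (u * a2 + v * b2) * slack K yG"
      using a b by (simp add: algebra_simps)
    then show "u *\<^sub>R x + v *\<^sub>R y \<in> A" unfolding A_def by blast
  qed
  moreover have "insert yG (insert yF R) \<subseteq> A"
  proof -
    have "r \<in> A" if "r \<in> R" for r
      unfolding A_def using \<K> slack_facet that by (intro CollectI exI[of _ 0]) auto
    moreover have "yF \<in> A" "yG \<in> A"
      unfolding A_def by (intro CollectI exI[of _ 1] exI[of _ 0], simp)
        (intro CollectI exI[of _ 0] exI[of _ 1], simp)
    ultimately show ?thesis by blast
  qed
  ultimately have "affine hull (insert yG (insert yF R)) \<subseteq> A"
    by (intro hull_minimal)
  then have "p \<in> A"
    using affine_hull_ridge_insert_two_points[OF R F G(1,3)] by blast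
  then show ?thesis unfolding A_def by blast
qed

text \<open>The slacks of facets through a ridge are affine functions vanishing on a set of
  codimension 2, so they are determined by their values at two points; evaluating at three points
  chosen in the relative interiors of three such facets gives incompatible signs.\<close>

lemma ridge_in_at_most_two_facets:
  assumes F: "F facet_of P" and G: "G facet_of P" and H: "H facet_of P"
    and distinct: "F \<noteq> G" "F \<noteq> H" "G \<noteq> H"
    and R: "R \<subseteq> F \<inter> G \<inter> H" "aff_dim R = int DIM('a) - 2"
  shows False
proof -
  obtain yF where yF: "yF \<in> F" "\<And>K. K facet_of P \<Longrightarrow> K \<noteq> F \<Longrightarrow> 0 < slack K yF"
    using facet_point_off_other_facets[OF F] by blast
  obtain yG where yG: "yG \<in> G" "\<And>K. K facet_of P \<Longrightarrow> K \<noteq> G \<Longrightarrow> 0 < slack K yG"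
    using facet_point_off_other_facets[OF G] by blast
  obtain yH where yH: "yH \<in> H" "\<And>K. K facet_of P \<Longrightarrow> K \<noteq> H \<Longrightarrow> 0 < slack K yH"
    using facet_point_off_other_facets[OF H] by blast
  note y = yF(1) yG(1) yH(1)
  have pos: "0 < slack G yF" "0 < slack H yF" "0 < slack F yG" "0 < slack H yG"
      "0 < slack F yH" "0 < slack G yH"
    using yF(2) yG(2) yH(2) F G H distinct by auto
  have RFG: "R \<subseteq> F" "R \<subseteq> G" using R(1) by blast+
  have "\<exists>l1 l2. \<forall>K\<in>{F, G, H}. slack K yH = l1 * slack K yF + l2 * slack K yG"
  proof (rule slacks_spanned_by_two_points[OF RFG R(2) F y(1) _ G y(2)])
    show "slack G yF \<noteq> 0" "slack F yG \<noteq> 0" using pos by simp_all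
    show "\<And>K. K \<in> {F, G, H} \<Longrightarrow> K facet_of P \<and> R \<subseteq> K" using R F G H by blast
  qed
  then obtain l1 l2 where l: "\<forall>K\<in>{F, G, H}. slack K yH = l1 * slack K yF + l2 * slack K yG"
    by blast
  have "0 < l2 * slack F yG" "0 < l1 * slack G yF"
    using l pos slack_facet F G y by auto
  then have "0 < l1" "0 < l2" using pos by (simp_all add: zero_less_mult_iff)
  moreover have "0 = l1 * slack H yF + l2 * slack H yG"
    using l slack_facet[OF H y(3)] by auto
  ultimately show False using pos by (smt (verit) mult_pos_pos)
qed

lemma adjacent_facets_containing_face:
  assumes e: "e face_of P" "e \<noteq> {}" "aff_dim e < int DIM('a) - 1"
  obtains F G where "F facet_of P" "G facet_of P" "adjacent_facets P F G" "e \<subseteq> F \<inter> G"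
proof -
  have "e \<noteq> P" using e(3) aff_dim_P by auto
  then obtain F where F: "F facet_of P" "e \<subseteq> F"
    using face_of_polyhedron_subset_facet[OF polyhedron_P e(1,2)] by metis
  have FP: "F face_of P" "F \<subseteq> P"
    using facet_of_imp_face_of[OF F(1)] facet_of_imp_subset[OF F(1)] .
  have "polyhedron F"
    using face_of_polytope_polytope[OF polytope_P FP(1)] polytope_imp_polyhedron by blast
  moreover have "e face_of F" using face_of_subset[OF e(1) F(2) FP(2)] .
  moreover have "e \<noteq> F" using e(3) aff_dim_facet[OF F(1)] by auto
  ultimately obtain R where R: "R facet_of F" "e \<subseteq> R"
    using face_of_polyhedron_subset_facet e(2) by metis
  obtain G where G: "G facet_of P" "G \<noteq> F" "F \<inter> G = R"
    using facet_of_facet_eq_Int_facets[OF polyhedron_P R(1) F(1)] by blast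
  have "aff_dim R = int DIM('a) - 2" using R(1) aff_dim_facet[OF F(1)] by (simp add: facet_of_def)
  then have "adjacent_facets P F G" unfolding adjacent_facets_def using F(1) G aff_dim_P by auto
  then show ?thesis using that F(1) G(1) R(2) G(3) by blast
qed

lemma adjacent_facets_through_codim3_face:
  assumes S: "S facet_of P" and R: "R facet_of S"
    and T: "T face_of S" "T \<subseteq> R" "T \<noteq> {}" "aff_dim T = int DIM('a) - 3"
  obtains F G where "F facet_of P" "F \<noteq> S" "F \<inter> S = R" "G facet_of P" "G \<noteq> S"
    "adjacent_facets P F G" "F \<inter> G \<inter> S = T"
proof -
  obtain F where F: "F facet_of P" "F \<noteq> S" "S \<inter> F = R"
    using facet_of_facet_eq_Int_facets[OF polyhedron_P R S] by blast
  have FP: "F face_of P" "F \<subseteq> P"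
    using facet_of_imp_face_of[OF F(1)] facet_of_imp_subset[OF F(1)] .
  have RP: "R face_of P" using R S face_of_trans facet_of_imp_face_of by blast
  have TP: "T face_of P" using T(1) S face_of_trans facet_of_imp_face_of by blast
  have TF: "T face_of F" using face_of_subset[OF TP _ FP(2)] T(2) F(3) by blast
  have dims: "aff_dim F = int DIM('a) - 1" "aff_dim R = int DIM('a) - 2"
    using aff_dim_facet[OF F(1)] aff_dim_facet[OF S] R by (auto simp: facet_of_def)
  have R_F: "R facet_of F"
    using face_of_subset[OF RP _ FP(2)] F(3) R dims by (auto simp: facet_of_def)
  have "polyhedron F"
    using face_of_polytope_polytope[OF polytope_P FP(1)] polytope_imp_polyhedron by blast
  then obtain R' where R': "R' facet_of F" "R' \<noteq> R" "T \<subseteq> R'"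
    using ridge_in_second_facet[OF _ TF T(3) _ R_F T(2)] T(4) dims by auto
  obtain G where G: "G facet_of P" "G \<noteq> F" "F \<inter> G = R'"
    using facet_of_facet_eq_Int_facets[OF polyhedron_P R'(1) F(1)] by blast
  have "G \<noteq> S" using G(3) F(3) R'(2) by blast
  have "aff_dim R' = int DIM('a) - 2" using R'(1) dims by (simp add: facet_of_def)
  then have adj: "adjacent_facets P F G"
    unfolding adjacent_facets_def using F(1) G aff_dim_P by auto
  have "aff_dim (R' \<inter> R) < aff_dim R'" using aff_dim_Int_facets_lt[OF R'(1) R_F R'(2)] .
  moreover have "(R' \<inter> R) face_of F"
    using R'(1) R_F face_of_Int facet_of_imp_face_of by blast
  moreover have "T \<subseteq> R' \<inter> R" using T(2) R'(3) by blast
  ultimately have "T = R' \<inter> R"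
    using face_of_subset_aff_dim_eq[OF TF] aff_dim_subset[of T "R' \<inter> R"] T(4)
      \<open>aff_dim R' = _\<close> by simp
  then have "F \<inter> G \<inter> S = T" using G(3) F(3) by blast
  then show ?thesis using that F(1,2) F(3) G(1) \<open>G \<noteq> S\<close> adj by blast
qed

end

section \<open>The simplex facet S, the family \<F> and the point v\<close>

locale beyond_simplex_facet = fulldim_polytope P for P :: "'a::euclidean_space set" +
  fixes S :: "'a set" and \<F> :: "'a set set" and v :: 'a
  assumes DIM_ge_3: "3 \<le> DIM('a)"
    and simplex_facet_S: "simplex_facet P S"
    and \<F>_adj: "\<F> \<subseteq> adj P S"
    and nonsimple_\<F>: "nonsimple P S \<F>"
    and v_in_V_S: "v \<in> V_S P S \<F> {}"
begin

lemma S_facet: "S facet_of P"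
  using simplex_facet_S by (simp add: simplex_facet_def)

lemma S_face: "S face_of P"
  using S_facet facet_of_imp_face_of by blast

lemma S_subset_P: "S \<subseteq> P"
  using S_facet facet_of_imp_subset by blast

lemma aff_dim_S: "aff_dim S = int DIM('a) - 1"
  using aff_dim_facet[OF S_facet] .

definition S_vertices :: "'a set" where
  "S_vertices = {x. x extreme_point_of S}"

lemma S_vertices:
  "\<not> affine_dependent S_vertices" "card S_vertices = DIM('a)" "convex hull S_vertices = S"
  \<comment> \<open>oriented this way because \<open>S_vertices\<close> is defined from \<open>S\<close>: the converse rewrite rule loops\<close>
proof -
  have "(aff_dim P - 1) simplex S" using simplex_facet_S by (simp add: simplex_facet_def)
  then obtain c where c: "\<not> affine_dependent c" "int (card c) = aff_dim P - 1 + 1"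
    "S = convex hull c"
    unfolding simplex_def by (elim exE conjE)
  moreover have "S_vertices = c"
    unfolding S_vertices_def
    by (simp add: c(3) extreme_point_of_convex_hull_affine_independent[OF c(1)])
  ultimately show "\<not> affine_dependent S_vertices" "card S_vertices = DIM('a)"
    "convex hull S_vertices = S" using aff_dim_P by simp_all
qed

lemma finite_S_vertices: "finite S_vertices"
  using aff_independent_finite[OF S_vertices(1)] .

lemma S_vertices_subset_S: "S_vertices \<subseteq> S"
  unfolding S_vertices_def extreme_point_of_def by blast

lemma \<F>_facet:
  assumes "F \<in> \<F>"
  shows "F facet_of P" "F \<noteq> S" "aff_dim (F \<inter> S) = int DIM('a) - 2"
proof -
  have "adjacent_facets P S F" using assms \<F>_adj unfolding adj_def by blast
  moreover have "S \<inter> F = F \<inter> S" by blast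
  ultimately show "F facet_of P" "F \<noteq> S" "aff_dim (F \<inter> S) = int DIM('a) - 2"
    using aff_dim_P unfolding adjacent_facets_def by auto
qed

lemma \<F>_ridge: "F \<in> \<F> \<Longrightarrow> (F \<inter> S) facet_of S"
proof -
  assume F: "F \<in> \<F>"
  have "(F \<inter> S) face_of P"
    using face_of_Int[OF facet_of_imp_face_of[OF \<F>_facet(1)[OF F]] S_face] .
  then have "(F \<inter> S) face_of S" using face_of_subset[OF _ _ S_subset_P] by blast
  moreover have "F \<inter> S \<noteq> {}" using \<F>_facet(3)[OF F] DIM_ge_3 by auto
  ultimately show "(F \<inter> S) facet_of S"
    using \<F>_facet(3)[OF F] aff_dim_S by (simp add: facet_of_def)
qed

lemma \<F>_inj_on_Int_S:
  assumes F: "F1 \<in> \<F>" "F2 \<in> \<F>" and eq: "F1 \<inter> S = F2 \<inter> S"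
  shows "F1 = F2"
proof (rule ccontr)
  assume "F1 \<noteq> F2"
  moreover have "F1 \<inter> S \<subseteq> S \<inter> F1 \<inter> F2" using eq by blast
  ultimately show False
    using ridge_in_at_most_two_facets[OF S_facet \<F>_facet(1)[OF F(1)] \<F>_facet(1)[OF F(2)]]
      \<F>_facet(2,3)[OF F(1)] \<F>_facet(2)[OF F(2)] by metis
qed

lemma nonsimpleD:
  assumes "G \<in> \<F>" "G' \<in> \<F>" "adjacent_facets P G G'" "(G \<inter> G' \<inter> S) face_of S"
    "aff_dim (G \<inter> G' \<inter> S) = int DIM('a) - 3"
  shows False
  using nonsimple_\<F> assms aff_dim_P unfolding nonsimple_def by auto

lemma slack_S_v: "slack S v < 0"
  using v_in_V_S facet_minus_eq[OF S_facet] unfolding V_S_def by blast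

lemma slack_\<F>_v: "F \<in> \<F> \<Longrightarrow> slack F v = 0"
  using v_in_V_S affine_hull_facet[OF \<F>_facet(1)] unfolding V_S_def by blast

lemma slack_v_pos_iff:
  assumes "F facet_of P"
  shows "0 < slack F v \<longleftrightarrow> F \<noteq> S \<and> F \<notin> \<F>"
proof
  assume "0 < slack F v"
  then show "F \<noteq> S \<and> F \<notin> \<F>" using slack_S_v slack_\<F>_v by force
next
  assume "F \<noteq> S \<and> F \<notin> \<F>"
  then have "v \<in> facet_plus P F" using v_in_V_S assms unfolding V_S_def by blast
  then show "0 < slack F v" using facet_plus_eq[OF assms] by blast
qed

lemma slack_v_nonneg: "F facet_of P \<Longrightarrow> F \<noteq> S \<Longrightarrow> 0 \<le> slack F v"
  using slack_v_pos_iff slack_\<F>_v by (metis order_less_imp_le order_refl)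

lemma v_notin_P: "v \<notin> P"
  using slack_S_v slack_nonneg[OF S_facet] by force

lemma Int_facets_of_S_in_beneath_facet:
  assumes R: "R1 facet_of S" "R2 facet_of S" "R1 \<noteq> R2"
  shows "\<exists>G. G facet_of P \<and> G \<noteq> S \<and> G \<notin> \<F> \<and> R1 \<inter> R2 \<subseteq> G"
proof -
  have T: "(R1 \<inter> R2) face_of S"
    using face_of_Int[OF facet_of_imp_face_of[OF R(1)] facet_of_imp_face_of[OF R(2)]] .
  have dim: "aff_dim (R1 \<inter> R2) = int DIM('a) - 3"
    using aff_dim_Int_facets_of_simplex[OF S_vertices(1)] R S_vertices(2,3) by simp
  then have "R1 \<inter> R2 \<noteq> {}" using DIM_ge_3 by (intro notI) simp
  then obtain F G where FG: "F facet_of P" "F \<noteq> S" "F \<inter> S = R1" "G facet_of P" "G \<noteq> S"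
    "adjacent_facets P F G" "F \<inter> G \<inter> S = R1 \<inter> R2"
    by (rule adjacent_facets_through_codim3_face[OF S_facet R(1) T Int_lower1 _ dim])
  show ?thesis
  proof (cases "F \<in> \<F> \<and> G \<in> \<F>")
    case True
    then show ?thesis using nonsimpleD[of F G] FG(6,7) T dim by simp
  next
    case False
    moreover have "R1 \<inter> R2 \<subseteq> F" "R1 \<inter> R2 \<subseteq> G" using FG(7) by blast+
    ultimately show ?thesis using FG(1,2,4,5) by blast
  qed
qed

lemma hull_of_S_vertices_in_beneath_facet:
  assumes "X \<subseteq> S_vertices" "2 \<le> card (S_vertices - X)"
  shows "\<exists>G. G facet_of P \<and> G \<noteq> S \<and> G \<notin> \<F> \<and> convex hull X \<subseteq> G"
proof -
  obtain R1 R2 where R: "R1 facet_of convex hull S_vertices" "R2 facet_of convex hull S_vertices"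
    "R1 \<noteq> R2" "convex hull X \<subseteq> R1 \<inter> R2"
    by (rule two_facets_of_simplex_containing[OF S_vertices(1) assms])
  then obtain G where "G facet_of P" "G \<noteq> S" "G \<notin> \<F>" "R1 \<inter> R2 \<subseteq> G"
    using Int_facets_of_S_in_beneath_facet[of R1 R2] unfolding S_vertices(3) by blast
  with R(4) show ?thesis by blast
qed

lemma vertex_of_S_in_beneath_facet:
  assumes "v' \<in> S_vertices"
  shows "\<exists>G. G facet_of P \<and> G \<noteq> S \<and> G \<notin> \<F> \<and> v' \<in> G"
proof -
  have "card (S_vertices - {v'}) = DIM('a) - 1"
    using assms S_vertices(2) finite_S_vertices by simp
  then have "2 \<le> card (S_vertices - {v'})" using DIM_ge_3 by simp
  then show ?thesis using hull_of_S_vertices_in_beneath_facet[of "{v'}"] assms by simp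
qed

lemma edge_in_S_in_beneath_facet:
  assumes "4 \<le> DIM('a)" "e edge_of P" "e \<subseteq> S"
  shows "\<exists>G. G facet_of P \<and> G \<noteq> S \<and> G \<notin> \<F> \<and> e \<subseteq> G"
proof -
  have "e face_of P" "aff_dim e = 1" using assms(2) by (simp_all add: edge_of_def)
  then have "e face_of convex hull S_vertices"
    unfolding S_vertices(3) using face_of_subset[OF _ assms(3) S_subset_P] by simp
  then obtain c where c: "c \<subseteq> S_vertices" "e = convex hull c"
    using face_of_convex_hull_affine_independent[OF S_vertices(1)] by auto
  have "int (card c) = aff_dim c + 1"
    by (rule aff_dim_affine_independent[OF affine_independent_subset[OF S_vertices(1) c(1)]])
  then have "card c = 2"
    using \<open>aff_dim e = 1\<close> c(2) by (simp add: aff_dim_convex_hull)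
  then have "card (S_vertices - c) = DIM('a) - 2"
    using c(1) S_vertices(2) finite_S_vertices by (simp add: card_Diff_subset finite_subset)
  then have "2 \<le> card (S_vertices - c)" using assms(1) by simp
  then show ?thesis using hull_of_S_vertices_in_beneath_facet[OF c(1)] c(2) by simp
qed

lemma edge_not_in_S_in_beneath_facet:
  assumes e: "e edge_of P" "\<not> e \<subseteq> S"
  shows "\<exists>G. G facet_of P \<and> G \<noteq> S \<and> G \<notin> \<F> \<and> e \<subseteq> G"
proof (rule ccontr)
  assume "\<not> ?thesis"
  then have in_\<F>: "\<And>G. G facet_of P \<Longrightarrow> e \<subseteq> G \<Longrightarrow> G \<in> \<F>" using e(2) by blast
  have "e face_of P" "e \<noteq> {}" "aff_dim e < int DIM('a) - 1"
    using e(1) DIM_ge_3 by (auto simp: edge_of_def)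
  then obtain F G where FG: "F facet_of P" "G facet_of P" "adjacent_facets P F G" "e \<subseteq> F \<inter> G"
    by (rule adjacent_facets_containing_face)
  then have \<F>: "F \<in> \<F>" "G \<in> \<F>" using in_\<F> by blast+
  have "F \<inter> S \<noteq> G \<inter> S"
  proof
    assume "F \<inter> S = G \<inter> S"
    then have "F \<inter> S \<subseteq> F \<inter> G" by blast
    moreover have "(F \<inter> G) face_of P"
      using face_of_Int[OF facet_of_imp_face_of[OF FG(1)] facet_of_imp_face_of[OF FG(2)]] .
    moreover have "(F \<inter> S) face_of P" using face_of_Int[OF facet_of_imp_face_of[OF FG(1)] S_face] .
    moreover have "aff_dim (F \<inter> S) = aff_dim (F \<inter> G)"
      using \<F>_facet(3)[OF \<F>(1)] FG(3) aff_dim_P by (simp add: adjacent_facets_def)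
    ultimately have "F \<inter> S = F \<inter> G" using face_of_subset_aff_dim_eq by blast
    then show False using FG(4) e(2) by blast
  qed
  then have "aff_dim ((F \<inter> S) \<inter> (G \<inter> S)) = int DIM('a) - 3"
    using aff_dim_Int_facets_of_simplex[OF S_vertices(1)] \<F>_ridge[OF \<F>(1)] \<F>_ridge[OF \<F>(2)]
      S_vertices(2,3) by simp
  moreover have "((F \<inter> S) \<inter> (G \<inter> S)) face_of S"
    using face_of_Int[OF facet_of_imp_face_of facet_of_imp_face_of, OF \<F>_ridge \<F>_ridge, OF \<F>] .
  moreover have "(F \<inter> S) \<inter> (G \<inter> S) = F \<inter> G \<inter> S" by blast
  ultimately show False using nonsimpleD[OF \<F> FG(3)] by simp
qed

lemma edge_in_S_only_in_\<F>_dim3: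
  assumes "DIM('a) = 3" "e edge_of P" "e \<subseteq> S"
    and in_\<F>: "\<And>G. G facet_of P \<Longrightarrow> G \<noteq> S \<Longrightarrow> e \<subseteq> G \<Longrightarrow> G \<in> \<F>"
  shows "\<exists>F\<in>\<F>. e = F \<inter> S"
proof -
  have "e face_of P" "aff_dim e = 1" using assms(2) by (simp_all add: edge_of_def)
  then have "e face_of S" "e \<noteq> {}" using face_of_subset[OF _ assms(3) S_subset_P] by auto
  then have "e facet_of S" using assms(1) aff_dim_S \<open>aff_dim e = 1\<close> by (simp add: facet_of_def)
  then obtain F where "F facet_of P" "F \<noteq> S" "S \<inter> F = e"
    using facet_of_facet_eq_Int_facets[OF polyhedron_P _ S_facet] by blast
  then show ?thesis using in_\<F> by blast
qed

lemma \<F>_ridge_edge_dim3: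
  assumes "DIM('a) = 3" "F \<in> \<F>"
  shows "(F \<inter> S) edge_of P" "\<And>G. G facet_of P \<Longrightarrow> F \<inter> S \<subseteq> G \<Longrightarrow> G = S \<or> G = F"
proof -
  have "(F \<inter> S) face_of P"
    using face_of_Int[OF facet_of_imp_face_of[OF \<F>_facet(1)[OF assms(2)]] S_face] .
  then show "(F \<inter> S) edge_of P"
    using \<F>_facet(3)[OF assms(2)] assms(1) by (simp add: edge_of_def)
  show "G = S \<or> G = F" if "G facet_of P" "F \<inter> S \<subseteq> G" for G
  proof (rule ccontr)
    assume "\<not> (G = S \<or> G = F)"
    moreover have "F \<inter> S \<subseteq> S \<inter> F \<inter> G" using that(2) by blast
    ultimately show False
      using ridge_in_at_most_two_facets[OF S_facet \<F>_facet(1)[OF assms(2)] that(1)]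
        \<F>_facet(2,3)[OF assms(2)] by metis
  qed
qed

lemma edges_of_P_in_no_beneath_facet:
  "{e. e edge_of P \<and> \<not> (\<exists>F. F facet_of P \<and> F \<noteq> S \<and> F \<notin> \<F> \<and> e \<subseteq> F)}
     = (if DIM('a) = 3 then (\<lambda>F. F \<inter> S) ` \<F> else {})"
  (is "?lost = _")
proof (cases "DIM('a) = 3")
  case True
  have "e \<in> (\<lambda>F. F \<inter> S) ` \<F>" if "e \<in> ?lost" for e
  proof -
    have "e edge_of P" "\<And>G. G facet_of P \<Longrightarrow> G \<noteq> S \<Longrightarrow> e \<subseteq> G \<Longrightarrow> G \<in> \<F>"
      using that by blast+
    moreover from this have "e \<subseteq> S" using edge_not_in_S_in_beneath_facet by blast
    ultimately show ?thesis using edge_in_S_only_in_\<F>_dim3[OF True] by blast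
  qed
  moreover have "F \<inter> S \<in> ?lost" if "F \<in> \<F>" for F
    using \<F>_ridge_edge_dim3[OF True that] \<F>_facet(2)[OF that] that by blast
  ultimately show ?thesis using True by auto
next
  case False
  then have "4 \<le> DIM('a)" using DIM_ge_3 by simp
  have "e \<notin> ?lost" for e
  proof
    assume "e \<in> ?lost"
    then have e: "e edge_of P" "\<not> (\<exists>F. F facet_of P \<and> F \<noteq> S \<and> F \<notin> \<F> \<and> e \<subseteq> F)"
      by simp_all
    show False
      using edge_not_in_S_in_beneath_facet[OF e(1)] edge_in_S_in_beneath_facet[OF \<open>4 \<le> _\<close> e(1)]
        e(2) by blast
  qed
  then show ?thesis using False by auto
qed

end

section \<open>Edges of Q\<close>

context beyond_simplex_facet
begin

abbreviation Q :: "'a set" where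
  "Q \<equiv> convex hull (insert v P)"

lemma P_subset_Q: "P \<subseteq> Q"
  using hull_subset[of "insert v P" convex] by blast

lemma v_in_Q: "v \<in> Q"
  by (simp add: hull_inc)

lemma S_subset_Q: "S \<subseteq> Q"
  using S_subset_P P_subset_Q by blast

lemma Q_as_hull_of_finite:
  obtains V where "finite V" "P = convex hull V" "Q = convex hull (insert v V)"
proof -
  obtain V where V: "finite V" "P = convex hull V"
    using polytope_P unfolding polytope_def by blast
  then have "Q = convex hull (insert v V)" using hull_insert[of convex v V] by simp
  with V that show ?thesis by blast
qed

lemma polytope_Q: "polytope Q"
proof -
  obtain V where "finite V" "Q = convex hull (insert v V)"
    by (rule Q_as_hull_of_finite)
  then show ?thesis unfolding polytope_def using finite_insert by blast
qed

lemma aff_dim_Q: "aff_dim Q = int DIM('a)"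
  using aff_dim_subset[OF P_subset_Q] aff_dim_le_DIM[of Q] aff_dim_P by simp

lemma v_extreme_point_of_Q: "v extreme_point_of Q"
proof -
  obtain V where "finite V" "P = convex hull V" "Q = convex hull (insert v V)"
    by (rule Q_as_hull_of_finite)
  then show ?thesis using extreme_point_of_convex_hull_insert v_notin_P by metis
qed

lemma extreme_point_of_Q: "x extreme_point_of Q \<Longrightarrow> x = v \<or> x \<in> P"
  using extreme_point_of_convex_hull by fastforce

lemma face_of_Q_zero_set:
  assumes \<phi>: "\<And>x. \<phi> x = g \<bullet> x - g0"
    and nonneg: "\<And>p. p \<in> P \<Longrightarrow> 0 \<le> \<phi> p" "0 \<le> \<phi> v"
  shows "Q \<inter> {x. \<phi> x = 0} = convex hull (insert v P \<inter> {x. \<phi> x = 0})"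
    "(Q \<inter> {x. \<phi> x = 0}) face_of Q"
proof -
  have eq: "{x. \<phi> x = 0} = {x. g \<bullet> x = g0}" using \<phi> by auto
  have ge: "g0 \<le> g \<bullet> x" if "x \<in> insert v P" for x
  proof -
    have "0 \<le> \<phi> x" using that nonneg by auto
    then show ?thesis using \<phi>[of x] by simp
  qed
  show "Q \<inter> {x. \<phi> x = 0} = convex hull (insert v P \<inter> {x. \<phi> x = 0})"
    unfolding eq by (rule convex_hull_Int_supporting_hyperplane[OF ge])
  then show "(Q \<inter> {x. \<phi> x = 0}) face_of Q"
    using face_of_convex_hull_Int_supporting_hyperplane[of "insert v P", OF ge] unfolding eq
    by simp
qed

lemma beneath_facet_face_of_Q:
  assumes F: "F facet_of P" and "0 < slack F v"
  shows "F face_of Q"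
proof -
  have "\<And>x. slack F x = facet_normal F \<bullet> x - snd (facet_ineq F)"
    by (simp add: slack_def)
  note zero_set = face_of_Q_zero_set[of "slack F", OF this slack_nonneg[OF F] less_imp_le[OF assms(2)]]
  have "insert v P \<inter> {x. slack F x = 0} = F"
    using assms mem_facet_iff_slack[OF F] facet_of_imp_subset[OF F] by auto
  moreover have "convex hull F = F"
    using face_of_imp_convex[OF facet_of_imp_face_of[OF F]] by (rule convex_hull_eq[THEN iffD2])
  ultimately show ?thesis using zero_set by simp
qed

lemma edge_in_beneath_facet_edge_of_Q:
  assumes e: "e edge_of P" and F: "F facet_of P" "F \<noteq> S" "F \<notin> \<F>" "e \<subseteq> F"
  shows "e edge_of Q"
proof -
  have "F face_of Q" using beneath_facet_face_of_Q F(1) slack_v_pos_iff[OF F(1)] F(2,3) by blast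
  moreover have "e face_of F"
    using face_of_subset[OF _ F(4) facet_of_imp_subset[OF F(1)]] e by (simp add: edge_of_def)
  ultimately show ?thesis using face_of_trans e by (auto simp: edge_of_def)
qed

text \<open>Otherwise the segment from v through a relative interior point of E can be prolonged
  inside P, and the face E of Q would have to contain v.\<close>

lemma face_of_P_and_Q_in_beneath_facet:
  assumes E: "E face_of P" "E face_of Q" "E \<noteq> {}" "v \<notin> E"
  shows "\<exists>F. F facet_of P \<and> F \<noteq> S \<and> F \<notin> \<F> \<and> E \<subseteq> F"
proof (rule ccontr)
  assume "\<not> ?thesis"
  then have not_beneath: "\<And>F. F facet_of P \<Longrightarrow> E \<subseteq> F \<Longrightarrow> slack F v \<le> 0"
    using slack_v_pos_iff by (meson not_le)
  obtain x where x: "x \<in> rel_interior E"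
    using rel_interior_eq_empty face_of_imp_convex[OF E(1)] E(3) by blast
  have xE: "x \<in> E" using x rel_interior_subset by blast
  have "\<forall>\<^sub>F t in at_right 0. x + t *\<^sub>R (x - v) \<in> P"
  proof (rule eventually_mem_P_along[OF E(1) x])
    fix F assume "F facet_of P" "E \<subseteq> F"
    then show "0 \<le> facet_normal F \<bullet> (x - v)"
      using facet_normal_inner_diff slack_facet xE not_beneath by fastforce
  qed
  with eventually_at_right_less have "\<forall>\<^sub>F t in at_right 0. 0 < t \<and> x + t *\<^sub>R (x - v) \<in> P"
    by (rule eventually_conj)
  then have "\<exists>t. 0 < t \<and> x + t *\<^sub>R (x - v) \<in> P"
    by (rule eventually_happens'[OF trivial_limit_at_right_real])
  then obtain t where t: "0 < t" "x + t *\<^sub>R (x - v) \<in> P" by blast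
  have "x \<noteq> v" using xE E(4) by blast
  then have "x \<in> open_segment (x + t *\<^sub>R (x - v)) v"
    by (rule mem_open_segment_extension[OF t(1)])
  moreover have "x + t *\<^sub>R (x - v) \<in> Q" using t(2) P_subset_Q by blast
  ultimately have "v \<in> E" using face_ofD[OF E(2) _ _ v_in_Q xE] by blast
  with E(4) show False ..
qed

lemma edge_of_Q_avoiding_v:
  assumes E: "E edge_of Q" "v \<notin> E"
  shows "E edge_of P \<and> (\<exists>F. F facet_of P \<and> F \<noteq> S \<and> F \<notin> \<F> \<and> E \<subseteq> F)"
proof -
  obtain a b where ab: "a \<noteq> b" "a extreme_point_of Q" "b extreme_point_of Q"
    "E = closed_segment a b"
    by (rule edge_of_polytope_eq_segment[OF polytope_Q E(1)])
  then have "a \<in> P" "b \<in> P" using extreme_point_of_Q E(2) by auto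
  then have "E \<subseteq> P" using ab(4) closed_segment_subset convex_P by blast
  then have EP: "E face_of P" using face_of_subset[OF _ _ P_subset_Q] E(1) by (auto simp: edge_of_def)
  moreover have "E \<noteq> {}" using ab(4) by auto
  ultimately show ?thesis
    using face_of_P_and_Q_in_beneath_facet E by (auto simp: edge_of_def)
qed

lemma S_meets_open_segment_from_v:
  assumes w: "w \<in> P" "w \<notin> S"
  obtains t where "0 < t" "t < 1" "t *\<^sub>R v + (1 - t) *\<^sub>R w \<in> S"
proof -
  have sw: "0 < slack S w"
    using mem_facet_iff_slack[OF S_facet w(1)] slack_nonneg[OF S_facet w(1)] w(2) by linarith
  define t where "t = slack S w / (slack S w - slack S v)"
  have t: "0 < t" "t < 1" using sw slack_S_v by (simp_all add: t_def field_simps)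
  define z where "z = t *\<^sub>R v + (1 - t) *\<^sub>R w"
  have slack_z: "slack F z = t * slack F v + (1 - t) * slack F w" for F
    unfolding z_def by (rule slack_convex_combination)
  have "slack S z = 0" using sw slack_S_v by (simp add: slack_z t_def field_simps)
  moreover have "z \<in> P"
  proof (rule mem_P_if_slack_nonneg)
    fix F assume F: "F facet_of P"
    show "0 \<le> slack F z"
    proof (cases "F = S")
      case True
      then show ?thesis using \<open>slack S z = 0\<close> by simp
    next
      case False
      then show ?thesis
        unfolding slack_z using t slack_v_nonneg[OF F] slack_nonneg[OF F w(1)] by simp
    qed
  qed
  ultimately have "z \<in> S" using mem_facet_iff_slack[OF S_facet] by blast
  then show ?thesis using that t unfolding z_def by blast
qed

lemma edge_of_Q_from_v_ends_in_S:
  assumes E: "closed_segment v w edge_of Q" and w: "w \<in> P"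
  shows "w \<in> S"
proof (rule ccontr)
  assume "w \<notin> S"
  then obtain t where t: "0 < t" "t < 1" and zS: "t *\<^sub>R v + (1 - t) *\<^sub>R w \<in> S"
    by (rule S_meets_open_segment_from_v[OF w])
  define z where "z = t *\<^sub>R v + (1 - t) *\<^sub>R w"
  have "z \<in> closed_segment v w"
    unfolding in_segment(1) z_def using t by (intro exI[of _ "1 - t"]) auto
  moreover have "z \<in> P" using zS S_subset_P unfolding z_def by blast
  ultimately have zw: "{z, w} \<subseteq> closed_segment v w \<inter> P" using w by auto
  have "z \<noteq> w"
  proof
    assume "z = w"
    then have "t *\<^sub>R (v - w) = 0" unfolding z_def by (simp add: algebra_simps)
    then show False using t v_notin_P w by auto
  qed
  have "(closed_segment v w \<inter> P) face_of P"
    using face_of_Int_convex_subset[OF _ P_subset_Q convex_P] E by (simp add: edge_of_def)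
  moreover have "aff_dim (closed_segment v w \<inter> P) \<le> 1"
    using E aff_dim_subset[of "closed_segment v w \<inter> P" "closed_segment v w"]
    by (auto simp: edge_of_def)
  moreover have "aff_dim {z, w} \<le> aff_dim (closed_segment v w \<inter> P)"
    using aff_dim_subset[OF zw] .
  ultimately have "(closed_segment v w \<inter> P) edge_of P" using \<open>z \<noteq> w\<close> by (simp add: edge_of_def)
  moreover have "\<not> closed_segment v w \<inter> P \<subseteq> S" using \<open>w \<notin> S\<close> w by auto
  ultimately obtain G where G: "G facet_of P" "G \<noteq> S" "G \<notin> \<F>" "closed_segment v w \<inter> P \<subseteq> G"
    using edge_not_in_S_in_beneath_facet by blast
  then have "slack G z = 0" "slack G w = 0" using zw slack_facet[OF G(1)] by auto
  moreover have "slack G z = t * slack G v + (1 - t) * slack G w"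
    unfolding z_def by (rule slack_convex_combination)
  moreover have "0 < slack G v" using slack_v_pos_iff[OF G(1)] G(2,3) by blast
  ultimately show False using t by simp
qed

lemma edge_of_Q_through_v:
  assumes E: "E edge_of Q" "v \<in> E"
  shows "\<exists>v'\<in>S_vertices. E = closed_segment v v'"
proof -
  obtain a b where ab: "a \<noteq> b" "a extreme_point_of Q" "b extreme_point_of Q"
    "E = closed_segment a b"
    by (rule edge_of_polytope_eq_segment[OF polytope_Q E(1)])
  have "v extreme_point_of E"
    using extreme_point_of_face E v_extreme_point_of_Q by (auto simp: edge_of_def)
  then have "v = a \<or> v = b" using ab(4) extreme_point_of_segment by blast
  then obtain w where w: "E = closed_segment v w" "w \<noteq> v" "w extreme_point_of Q"
    using ab closed_segment_commute by metis
  then have "w \<in> P" using extreme_point_of_Q by blast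
  then have "w \<in> S" using edge_of_Q_from_v_ends_in_S E(1) w(1) by blast
  then have "w extreme_point_of S" using extreme_point_of_subset[OF w(3) S_subset_Q] by blast
  then show ?thesis using w(1) unfolding S_vertices_def by blast
qed


lemma vertex_of_S_supporting_function:
  assumes "v' \<in> S_vertices"
  obtains g g0 where "g \<bullet> v = g0" "\<And>p. p \<in> P \<Longrightarrow> g0 \<le> g \<bullet> p"
    "P \<inter> {x. g \<bullet> x = g0} = {v'}"
proof -
  define \<G> where "\<G> = {G. G facet_of P \<and> v' \<in> G}"
  have fin: "finite \<G>" unfolding \<G>_def using finite_facets by (simp add: finite_subset)
  have \<G>: "\<And>G. G \<in> \<G> \<Longrightarrow> G facet_of P" unfolding \<G>_def by blast
  have v'S: "v' \<in> S" using assms S_vertices_subset_S by blast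
  then have S\<G>: "S \<in> \<G>" unfolding \<G>_def using S_facet by blast
  obtain G0 where "G0 facet_of P" "G0 \<noteq> S" "G0 \<notin> \<F>" "v' \<in> G0"
    using vertex_of_S_in_beneath_facet[OF assms] by blast
  then have G0: "G0 \<in> \<G> - {S}" "0 < slack G0 v"
    using slack_v_pos_iff unfolding \<G>_def by auto
  define \<sigma> where "\<sigma> = (\<Sum>G\<in>\<G> - {S}. slack G v)"
  have "0 < \<sigma>"
    unfolding \<sigma>_def using fin G0 slack_v_nonneg unfolding \<G>_def
    by (intro sum_pos2[of _ G0]) auto
  \<comment> \<open>the weight of S makes the combination of slacks vanish at v\<close>
  define \<mu> where "\<mu> G = (if G = S then \<sigma> / - slack S v else 1)" for G
  have \<mu>: "0 < \<mu> G" for G using \<open>0 < \<sigma>\<close> slack_S_v by (simp add: \<mu>_def divide_pos_neg)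
  obtain g g0 where g: "\<And>x. g \<bullet> x - g0 = (\<Sum>G\<in>\<G>. \<mu> G * slack G x)"
    using slack_combination by blast
  have "g \<bullet> v - g0 = \<mu> S * slack S v + (\<Sum>G\<in>\<G> - {S}. \<mu> G * slack G v)"
    unfolding g using sum.remove[OF fin S\<G>] .
  also have "\<dots> = 0" using slack_S_v by (simp add: \<mu>_def \<sigma>_def)
  finally have "g \<bullet> v = g0" by simp
  moreover have "g0 \<le> g \<bullet> p" if "p \<in> P" for p
    using g[of p] slack_sum_nonneg[of \<G> \<mu> p, OF \<G> \<mu> that] by simp
  moreover have "P \<inter> {x. g \<bullet> x = g0} = {v'}"
  proof -
    have "v' extreme_point_of P"
      using extreme_point_of_face[OF S_face] v'S assms unfolding S_vertices_def by blast
    then have "\<Inter>\<G> = {v'}" unfolding \<G>_def by (rule vertex_eq_Inter_facets)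
    moreover have "g \<bullet> p = g0 \<longleftrightarrow> p \<in> \<Inter>\<G>" if "p \<in> P" for p
      using g[of p] slack_sum_eq_0_iff[OF fin \<G> \<mu> that] by auto
    ultimately show ?thesis using v'S S_subset_P by blast
  qed
  ultimately show ?thesis by (rule that)
qed

lemma segment_to_vertex_of_S_edge_of_Q:
  assumes "v' \<in> S_vertices"
  shows "closed_segment v v' edge_of Q"
proof -
  obtain g g0 where g: "g \<bullet> v = g0" "\<And>p. p \<in> P \<Longrightarrow> g0 \<le> g \<bullet> p"
    "P \<inter> {x. g \<bullet> x = g0} = {v'}"
    using vertex_of_S_supporting_function[OF assms] by metis
  have "\<And>x. (\<lambda>x. g \<bullet> x - g0) x = g \<bullet> x - g0" by simp
  note zero_set = face_of_Q_zero_set[of "\<lambda>x. g \<bullet> x - g0", OF this]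
  have "insert v P \<inter> {x. g \<bullet> x - g0 = 0} = insert v (P \<inter> {x. g \<bullet> x = g0})"
    using g(1) by auto
  then have "Q \<inter> {x. g \<bullet> x - g0 = 0} = closed_segment v v'"
    using zero_set(1) g(1,2,3) by (simp add: segment_convex_hull)
  moreover have "v \<noteq> v'" using g(3) v_notin_P by blast
  ultimately show ?thesis
    using zero_set(2) g(1,2) by (simp add: edge_of_def segment_convex_hull aff_dim_convex_hull)
qed

section \<open>Facets of Q through v\<close>

lemma facet_of_Q_through_v_eq_hull:
  assumes K: "K facet_of Q" "v \<in> K"
  shows "K = convex hull (insert v (K \<inter> P))" "aff_dim (insert v (K \<inter> P)) = int DIM('a) - 1"
proof -
  have "K exposed_face_of Q"
    using exposed_face_of_polyhedron[OF polytope_imp_polyhedron[OF polytope_Q]]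
      facet_of_imp_face_of[OF K(1)] by blast
  then obtain a b where ab: "Q \<subseteq> {x. a \<bullet> x \<le> b}" "K = Q \<inter> {x. a \<bullet> x = b}"
    unfolding exposed_face_of_def by blast
  have H: "{x. a \<bullet> x = b} = {x. (- a) \<bullet> x = - b}" by auto
  have "- b \<le> (- a) \<bullet> x" if "x \<in> insert v P" for x
    using that ab(1) P_subset_Q v_in_Q by auto
  then have "K = convex hull (insert v P \<inter> {x. a \<bullet> x = b})"
    unfolding ab(2) H by (rule convex_hull_Int_supporting_hyperplane)
  also have "insert v P \<inter> {x. a \<bullet> x = b} = insert v (K \<inter> P)"
    using ab(2) K(2) P_subset_Q by blast
  finally show "K = convex hull (insert v (K \<inter> P))" .
  then show "aff_dim (insert v (K \<inter> P)) = int DIM('a) - 1"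
    using K(1) aff_dim_Q by (metis aff_dim_convex_hull facet_of_def)
qed

lemma facet_of_Q_through_v_Int_P_in_\<F>_facet:
  assumes K: "K facet_of Q" "v \<in> K" and F: "F \<in> \<F>" "K \<inter> P \<subseteq> F"
  shows "K \<inter> P = F"
proof -
  have F_facet: "F facet_of P" using \<F>_facet(1)[OF F(1)] .
  have "insert v (K \<inter> P) \<subseteq> affine hull F"
    using F slack_\<F>_v affine_hull_facet[OF F_facet] hull_subset[of F affine] by auto
  then have "affine hull (insert v (K \<inter> P)) \<subseteq> affine hull F"
    by (simp add: hull_minimal)
  moreover have "aff_dim (affine hull (insert v (K \<inter> P))) = aff_dim (affine hull F)"
    using facet_of_Q_through_v_eq_hull(2)[OF K] aff_dim_facet[OF F_facet] by simp
  ultimately have "affine hull (insert v (K \<inter> P)) = affine hull F"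
    by (intro affine_dim_equal) auto
  moreover have "affine hull (insert v (K \<inter> P)) \<subseteq> affine hull K"
    using K(2) by (intro hull_mono) blast
  ultimately have "F \<subseteq> Q \<inter> affine hull K"
    using facet_of_imp_subset[OF F_facet] P_subset_Q hull_subset[of F affine] by blast
  also have "\<dots> = K"
    using polyhedron_Int_affine_hull_face[OF polytope_imp_polyhedron[OF polytope_Q]]
      facet_of_imp_face_of[OF K(1)] by blast
  finally show ?thesis using F(2) facet_of_imp_subset[OF F_facet] by blast
qed

text \<open>Otherwise moving from a relative interior point of K \<inter> P towards v stays in K \<inter> P,
  which puts v into the affine hull of K \<inter> P.\<close>

lemma facet_of_Q_through_v_Int_P_in_nonbeneath_facet:
  assumes K: "K face_of Q" "v \<in> K" "K \<inter> P \<noteq> {}" "v \<notin> affine hull (K \<inter> P)"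
  shows "\<exists>F. F facet_of P \<and> K \<inter> P \<subseteq> F \<and> slack F v \<le> 0"
proof (rule ccontr)
  assume "\<not> ?thesis"
  then have beneath: "\<And>F. F facet_of P \<Longrightarrow> K \<inter> P \<subseteq> F \<Longrightarrow> 0 < slack F v"
    by (meson not_le)
  have G: "(K \<inter> P) face_of P" using face_of_Int_convex_subset[OF K(1) P_subset_Q convex_P] .
  obtain x where x: "x \<in> rel_interior (K \<inter> P)"
    using rel_interior_eq_empty face_of_imp_convex[OF G] K(3) by blast
  have xG: "x \<in> K \<inter> P" using x rel_interior_subset by blast
  have "\<forall>\<^sub>F t in at_right 0. x + t *\<^sub>R (v - x) \<in> P"
  proof (rule eventually_mem_P_along[OF G x])
    fix F assume "F facet_of P" "K \<inter> P \<subseteq> F"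
    then show "0 \<le> facet_normal F \<bullet> (v - x)"
      using facet_normal_inner_diff slack_facet xG beneath by fastforce
  qed
  moreover have "\<forall>\<^sub>F t in at_right 0. 0 < t \<and> t < (1::real)"
    unfolding eventually_at_right_field by (intro exI[of _ 1]) auto
  ultimately have "\<forall>\<^sub>F t in at_right 0. (0 < t \<and> t < 1) \<and> x + t *\<^sub>R (v - x) \<in> P"
    by (rule eventually_conj[rotated])
  then have "\<exists>t. (0 < t \<and> t < 1) \<and> x + t *\<^sub>R (v - x) \<in> P"
    by (rule eventually_happens'[OF trivial_limit_at_right_real])
  then obtain t where t: "0 < t" "t < 1" "x + t *\<^sub>R (v - x) \<in> P" by blast
  have "x + t *\<^sub>R (v - x) = (1 - t) *\<^sub>R x + t *\<^sub>R v" by (simp add: algebra_simps)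
  then have "x + t *\<^sub>R (v - x) \<in> K"
    using convexD[OF face_of_imp_convex[OF K(1)], of x v "1 - t" t] xG K(2) t(1,2) by simp
  with t(3) xG have "{x, x + t *\<^sub>R (v - x)} \<subseteq> K \<inter> P" by blast
  then have "affine hull {x, x + t *\<^sub>R (v - x)} \<subseteq> affine hull (K \<inter> P)" by (rule hull_mono)
  then show False using mem_affine_hull_extension[of t v x] t(1) K(4) by auto
qed

lemma facet_of_Q_through_v_cases:
  assumes K: "K facet_of Q" "v \<in> K"
  shows "K \<inter> P \<in> \<F> \<or> ((K \<inter> P) facet_of S \<and> (\<forall>F\<in>\<F>. \<not> K \<inter> P \<subseteq> F))"
proof -
  have G: "(K \<inter> P) face_of P"
    using face_of_Int_convex_subset[OF facet_of_imp_face_of[OF K(1)] P_subset_Q convex_P] .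
  have dim: "aff_dim (insert v (K \<inter> P)) = int DIM('a) - 1"
    using facet_of_Q_through_v_eq_hull(2)[OF K] .
  show ?thesis
  proof (cases "v \<in> affine hull (K \<inter> P)")
    case True
    then have "aff_dim (K \<inter> P) = int DIM('a) - 1" using dim by (simp add: aff_dim_insert)
    moreover from this have "K \<inter> P \<noteq> {}" using DIM_ge_3 by (intro notI) simp
    ultimately have facet: "(K \<inter> P) facet_of P" using G aff_dim_P by (simp add: facet_of_def)
    then have "slack (K \<inter> P) v = 0" using True affine_hull_facet[OF facet] by blast
    then show ?thesis using slack_v_pos_iff[OF facet] slack_S_v by force
  next
    case False
    then have dim_G: "aff_dim (K \<inter> P) = int DIM('a) - 2" using dim by (simp add: aff_dim_insert)
    then have "K \<inter> P \<noteq> {}" using DIM_ge_3 by (intro notI) simp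
    have not_in_\<F>: "\<forall>F\<in>\<F>. \<not> K \<inter> P \<subseteq> F"
      using facet_of_Q_through_v_Int_P_in_\<F>_facet[OF K] dim_G \<F>_facet(1) aff_dim_facet
      by fastforce
    obtain F where F: "F facet_of P" "K \<inter> P \<subseteq> F" "slack F v \<le> 0"
      using facet_of_Q_through_v_Int_P_in_nonbeneath_facet[OF facet_of_imp_face_of[OF K(1)] K(2)
          \<open>K \<inter> P \<noteq> {}\<close> False] by blast
    then have "F = S \<or> F \<in> \<F>" using slack_v_pos_iff[OF F(1)] by linarith
    then have "F = S" using not_in_\<F> F(2) by blast
    then have "(K \<inter> P) face_of S" using face_of_subset[OF G _ S_subset_P] F(2) by blast
    then have "(K \<inter> P) facet_of S"
      using \<open>K \<inter> P \<noteq> {}\<close> dim_G aff_dim_S by (simp add: facet_of_def)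
    then show ?thesis using not_in_\<F> by blast
  qed
qed


lemma ridge_of_S_supporting_function:
  assumes "R facet_of S"
  obtains g g0 where "g \<bullet> v = g0" "\<And>p. p \<in> P \<Longrightarrow> g0 \<le> g \<bullet> p"
    "S \<inter> {x. g \<bullet> x = g0} = R" "\<exists>p\<in>P. g0 < g \<bullet> p"
proof -
  obtain F where F: "F facet_of P" "F \<noteq> S" "S \<inter> F = R"
    using facet_of_facet_eq_Int_facets[OF polyhedron_P assms S_facet] by blast
  define \<alpha> where "\<alpha> = slack F v"
  define \<beta> where "\<beta> = - slack S v"
  have \<alpha>: "0 \<le> \<alpha>" using slack_v_nonneg[OF F(1,2)] by (simp add: \<alpha>_def)
  have \<beta>: "0 < \<beta>" using slack_S_v by (simp add: \<beta>_def)
  have "\<exists>g g0. \<forall>x. g \<bullet> x - g0 = \<beta> * slack F x + \<alpha> * slack S x"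
    by (intro exI[of _ "\<beta> *\<^sub>R facet_normal F + \<alpha> *\<^sub>R facet_normal S"]
        exI[of _ "\<beta> * snd (facet_ineq F) + \<alpha> * snd (facet_ineq S)"])
      (simp add: slack_def algebra_simps inner_add_left)
  then obtain g g0 where g: "\<And>x. g \<bullet> x - g0 = \<beta> * slack F x + \<alpha> * slack S x" by blast
  have "g \<bullet> v = g0" using g[of v] by (simp add: \<alpha>_def \<beta>_def)
  moreover have "g0 \<le> g \<bullet> p" if "p \<in> P" for p
    using g[of p] mult_nonneg_nonneg[OF \<alpha> slack_nonneg[OF S_facet that]]
      mult_nonneg_nonneg[OF less_imp_le[OF \<beta>] slack_nonneg[OF F(1) that]] by linarith
  moreover have "S \<inter> {x. g \<bullet> x = g0} = R"
  proof -
    have "g \<bullet> x = g0 \<longleftrightarrow> x \<in> F" if "x \<in> S" for x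
      using g[of x] \<beta> slack_facet[OF S_facet that] mem_facet_iff_slack[OF F(1)] that S_subset_P
      by auto
    then show ?thesis using F(3) by blast
  qed
  moreover have "\<exists>p\<in>P. g0 < g \<bullet> p"
  proof -
    obtain p where p: "p \<in> P" "0 < slack F p" using exists_slack_pos[OF F(1)] by blast
    then have "0 < \<beta> * slack F p + \<alpha> * slack S p"
      using \<alpha> \<beta> slack_nonneg[OF S_facet p(1)] by (simp add: add_pos_nonneg)
    then have "g0 < g \<bullet> p" using g[of p] by linarith
    then show ?thesis using p(1) by blast
  qed
  ultimately show ?thesis by (rule that)
qed

lemma facet_of_Q_over_ridge_of_S:
  assumes R: "R facet_of S"
  obtains K where "K facet_of Q" "v \<in> K" "K \<inter> S = R"
proof -
  obtain g g0 where g: "g \<bullet> v = g0" "\<And>p. p \<in> P \<Longrightarrow> g0 \<le> g \<bullet> p"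
    "S \<inter> {x. g \<bullet> x = g0} = R" "\<exists>p\<in>P. g0 < g \<bullet> p"
    using ridge_of_S_supporting_function[OF R] by metis
  define K where "K = Q \<inter> {x. g \<bullet> x - g0 = 0}"
  have "\<And>x. (\<lambda>x. g \<bullet> x - g0) x = g \<bullet> x - g0" by simp
  then have KQ: "K face_of Q"
    using face_of_Q_zero_set(2)[of "\<lambda>x. g \<bullet> x - g0"] g(1,2) unfolding K_def by simp
  have vK: "v \<in> K" using v_in_Q g(1) unfolding K_def by simp
  have KS: "K \<inter> S = R" using g(3) S_subset_Q unfolding K_def by auto
  have "K \<noteq> Q" using g(4) P_subset_Q unfolding K_def by force
  then have "aff_dim K < int DIM('a)"
    using face_of_aff_dim_lt[OF convex_convex_hull KQ] aff_dim_Q by simp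
  moreover have "v \<notin> affine hull R"
  proof
    assume "v \<in> affine hull R"
    moreover have "affine hull R \<subseteq> affine hull S"
      using facet_of_imp_subset[OF R] by (rule hull_mono)
    ultimately show False using affine_hull_facet[OF S_facet] slack_S_v by auto
  qed
  then have "aff_dim (insert v R) = int DIM('a) - 1"
    using R aff_dim_S by (simp add: aff_dim_insert facet_of_def)
  moreover have "aff_dim (insert v R) \<le> aff_dim K"
    using vK KS by (intro aff_dim_subset) blast
  ultimately have "aff_dim K = aff_dim Q - 1" using aff_dim_Q by simp
  then have "K facet_of Q" using KQ vK by (auto simp: facet_of_def)
  then show ?thesis using that vK KS by blast
qed

lemma facet_of_Q_through_v_Int_S:
  assumes "K facet_of Q" "v \<in> K"
  shows "(K \<inter> S) facet_of S" "K \<inter> P \<in> \<F> \<longleftrightarrow> (\<exists>F\<in>\<F>. K \<inter> S \<subseteq> F)"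
    "K \<inter> P \<notin> \<F> \<Longrightarrow> K \<inter> S = K \<inter> P"
proof -
  have KS: "K \<inter> S = (K \<inter> P) \<inter> S" using S_subset_P by blast
  have not_\<F>: "(K \<inter> P) facet_of S \<and> (\<forall>F\<in>\<F>. \<not> K \<inter> P \<subseteq> F)" if "K \<inter> P \<notin> \<F>"
    using facet_of_Q_through_v_cases[OF assms] that by blast
  then show eq: "K \<inter> S = K \<inter> P" if "K \<inter> P \<notin> \<F>"
    using that KS facet_of_imp_subset by blast
  show "(K \<inter> S) facet_of S"
  proof (cases "K \<inter> P \<in> \<F>")
    case True
    then show ?thesis using \<F>_ridge[OF True] KS by simp
  next
    case False
    then show ?thesis using not_\<F> eq by simp
  qed
  show "K \<inter> P \<in> \<F> \<longleftrightarrow> (\<exists>F\<in>\<F>. K \<inter> S \<subseteq> F)"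
  proof (cases "K \<inter> P \<in> \<F>")
    case True
    then show ?thesis using KS by blast
  next
    case False
    then show ?thesis using not_\<F> eq by simp
  qed
qed

lemma facet_of_Q_through_v_inj:
  assumes K1: "K1 facet_of Q" "v \<in> K1" and K2: "K2 facet_of Q" "v \<in> K2"
    and eq: "K1 \<inter> S = K2 \<inter> S"
  shows "K1 = K2"
proof -
  have "K1 \<inter> P = K2 \<inter> P"
  proof (cases "K1 \<inter> P \<in> \<F>")
    case True
    then have "K2 \<inter> P \<in> \<F>"
      using facet_of_Q_through_v_Int_S(2)[OF K1] facet_of_Q_through_v_Int_S(2)[OF K2] eq by simp
    moreover have "(K1 \<inter> P) \<inter> S = (K2 \<inter> P) \<inter> S" using eq S_subset_P by blast
    ultimately show ?thesis using \<F>_inj_on_Int_S True by blast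
  next
    case False
    then have "K2 \<inter> P \<notin> \<F>"
      using facet_of_Q_through_v_Int_S(2)[OF K1] facet_of_Q_through_v_Int_S(2)[OF K2] eq by simp
    then show ?thesis
      using facet_of_Q_through_v_Int_S(3)[OF K1 False] facet_of_Q_through_v_Int_S(3)[OF K2] eq
      by simp
  qed
  then show ?thesis
    using facet_of_Q_through_v_eq_hull(1)[OF K1] facet_of_Q_through_v_eq_hull(1)[OF K2] by simp
qed

lemma fdeg_segment_to_vertex_of_S:
  assumes "v' \<in> S_vertices"
  shows "fdeg Q (closed_segment v v') = fdeg S {v'}"
proof -
  have v'S: "v' \<in> S" using assms S_vertices_subset_S by blast
  let ?A = "{K. K facet_of Q \<and> closed_segment v v' \<subseteq> K}"
  let ?B = "{R. R facet_of S \<and> {v'} \<subseteq> R}"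
  have "inj_on (\<lambda>K. K \<inter> S) ?A"
    using facet_of_Q_through_v_inj by (intro inj_onI) blast
  moreover have "(\<lambda>K. K \<inter> S) ` ?A \<subseteq> ?B"
    using facet_of_Q_through_v_Int_S(1) v'S by blast
  moreover have "?B \<subseteq> (\<lambda>K. K \<inter> S) ` ?A"
  proof
    fix R assume R: "R \<in> ?B"
    then obtain K where K: "K facet_of Q" "v \<in> K" "K \<inter> S = R"
      using facet_of_Q_over_ridge_of_S by blast
    then have "closed_segment v v' \<subseteq> K"
      using R face_of_imp_convex[OF facet_of_imp_face_of[OF K(1)]]
      by (intro closed_segment_subset) auto
    then show "R \<in> (\<lambda>K. K \<inter> S) ` ?A" using K by blast
  qed
  ultimately have "bij_betw (\<lambda>K. K \<inter> S) ?A ?B" unfolding bij_betw_def by blast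
  then show ?thesis unfolding fdeg_def by (rule bij_betw_same_card)
qed

section \<open>Counting the edges of Q\<close>

lemma edges_of_Q:
  "{E. E edge_of Q}
     = {e. e edge_of P \<and> (\<exists>F. F facet_of P \<and> F \<noteq> S \<and> F \<notin> \<F> \<and> e \<subseteq> F)}
       \<union> closed_segment v ` S_vertices"
proof (intro equalityI subsetI)
  fix E assume "E \<in> {E. E edge_of Q}"
  then have E: "E edge_of Q" by simp
  show "E \<in> {e. e edge_of P \<and> (\<exists>F. F facet_of P \<and> F \<noteq> S \<and> F \<notin> \<F> \<and> e \<subseteq> F)}
       \<union> closed_segment v ` S_vertices"
  proof (cases "v \<in> E")
    case True
    then show ?thesis using edge_of_Q_through_v[OF E] by blast
  next
    case False
    then show ?thesis using edge_of_Q_avoiding_v[OF E] by blast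
  qed
next
  fix E assume "E \<in> {e. e edge_of P \<and> (\<exists>F. F facet_of P \<and> F \<noteq> S \<and> F \<notin> \<F> \<and> e \<subseteq> F)}
       \<union> closed_segment v ` S_vertices"
  then show "E \<in> {E. E edge_of Q}"
    using edge_in_beneath_facet_edge_of_Q segment_to_vertex_of_S_edge_of_Q by auto
qed

lemma card_segments_to_S_vertices: "card (closed_segment v ` S_vertices) = DIM('a)"
proof -
  have "v \<notin> S_vertices" using S_vertices_subset_S S_subset_P v_notin_P by blast
  then have "inj_on (closed_segment v) S_vertices"
    by (intro inj_onI) (auto simp: doubleton_eq_iff)
  then show ?thesis using card_image S_vertices(2) by metis
qed

lemma f1_Q:
  "int (f1 Q) = int (f1 P) + int DIM('a) - (if DIM('a) = 3 then int (card \<F>) else 0)"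
proof -
  let ?kept = "{e. e edge_of P \<and> (\<exists>F. F facet_of P \<and> F \<noteq> S \<and> F \<notin> \<F> \<and> e \<subseteq> F)}"
  let ?lost = "{e. e edge_of P \<and> \<not> (\<exists>F. F facet_of P \<and> F \<noteq> S \<and> F \<notin> \<F> \<and> e \<subseteq> F)}"
  have "finite {e. e edge_of P}"
    using finite_polytope_faces[OF polytope_P] by (rule finite_subset[rotated]) (auto simp: edge_of_def)
  then have fin: "finite ?kept" "finite ?lost" by (auto intro: finite_subset[rotated])
  have split: "{e. e edge_of P} = ?kept \<union> ?lost" by blast
  have P_edges: "f1 P = card ?kept + card ?lost"
    unfolding f1_def split by (rule card_Un_disjoint[OF fin]) blast
  have disj: "?kept \<inter> closed_segment v ` S_vertices = {}"
  proof -
    have "v \<in> E" if "E \<in> closed_segment v ` S_vertices" for E using that by auto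
    moreover have "E \<subseteq> P" if "E \<in> ?kept" for E using that edge_of_imp_subset by blast
    ultimately show ?thesis using v_notin_P by blast
  qed
  have Q_edges: "f1 Q = card ?kept + DIM('a)"
    unfolding f1_def edges_of_Q card_segments_to_S_vertices[symmetric]
    by (rule card_Un_disjoint[OF fin(1) finite_imageI[OF finite_S_vertices] disj])
  have "inj_on (\<lambda>F. F \<inter> S) \<F>" using \<F>_inj_on_Int_S by (intro inj_onI) blast
  then have "card ?lost = (if DIM('a) = 3 then card \<F> else 0)"
    unfolding edges_of_P_in_no_beneath_facet by (simp add: card_image)
  then show ?thesis using P_edges Q_edges by simp
qed

end

theorem proposition2p15:
  fixes P :: "'a::euclidean_space set" and S :: "'a set" and \<F> :: "'a set set" and v :: 'a
  assumes "DIM('a) \<ge> 3"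
    and "polytope P" and "aff_dim P = int DIM('a)"
    and "simplex_facet P S" and "bounded_position P S"
    and "\<F> \<subseteq> adj P S" and "nonsimple P S \<F>"
    and "v \<in> V_S P S \<F> {}"
  defines "Q \<equiv> convex hull (insert v P)"
  shows "(\<forall>e. e edge_of Q \<longrightarrow>
            (e edge_of P \<and> (\<exists>F. F facet_of P \<and> F \<noteq> S \<and> F \<notin> \<F> \<and> e \<subseteq> F)) \<or>
            (\<exists>v'. v' extreme_point_of S \<and> e = closed_segment v v'))
       \<and> (\<forall>v'. v' extreme_point_of S \<longrightarrow>
            closed_segment v v' edge_of Q \<and> fdeg Q (closed_segment v v') = fdeg S {v'})
       \<and> int (f1 Q) = int (f1 P) + int DIM('a) - (if DIM('a) = 3 then int (card \<F>) else 0)"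
proof -
  interpret beyond_simplex_facet P S \<F> v
    using assms(1-4,6-8) by unfold_locales
  have "e edge_of Q \<Longrightarrow>
      (e edge_of P \<and> (\<exists>F. F facet_of P \<and> F \<noteq> S \<and> F \<notin> \<F> \<and> e \<subseteq> F)) \<or>
      (\<exists>v'. v' extreme_point_of S \<and> e = closed_segment v v')" for e
    unfolding Q_def using edge_of_Q_avoiding_v edge_of_Q_through_v S_vertices_def by blast
  moreover have "closed_segment v v' edge_of Q \<and> fdeg Q (closed_segment v v') = fdeg S {v'}"
    if "v' extreme_point_of S" for v'
    unfolding Q_def using that segment_to_vertex_of_S_edge_of_Q fdeg_segment_to_vertex_of_S
    by (simp add: S_vertices_def)
  ultimately show ?thesis unfolding Q_def using f1_Q by blast
qed

end
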